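(* Let $\omega$ and $\omega'$ be two nonsingular Sturmian words (not necessarily of the same slope, i.e. not necessarily with the same set of factors). Then for every nonempty prefix $u$ of $\omega$ and every nonempty prefix $u'$ of $\omega'$, the set $\omega|_u\cap\omega'|_{u'}$ is an IP$^*$-set (respectively, a central$^*$ set); in particular it is infinite.
   Context: A Sturmian word is an infinite word over $\{0,1\}$ having exactly $k+1$ distinct factors of length $k$ for every $k\ge0$. With $T$ the shift and $\Omega$ the shift-orbit closure of a Sturmian word $\omega$, the characteristic word $\tilde\omega$ is the unique element of $\Omega$ all of whose prefixes $v$ are left special ($0v$, $1v$ both factors of $\omega$); $\omega$ is nonsingular if $T^n(\omega)\ne\tilde\omega$ for all $n\ge1$. $\omega|_u=\{n\in\mathbb N:\omega_n\cdots\omega_{n+|u|-1}=u\}$. A set $A\subseteq\mathbb N$ is an IP-set if there is $x_0<x_1<\cdots$ in $\mathbb N$ with $\sum_{n\in F}x_n\in A$ for all nonempty finite $F$; IP$^*$ if it meets every IP-set. $\beta\mathbb N$ is the set of ultrafilters on $\mathbb N$ with addition $A\in p+q$ iff $\{n:A-n\in p\}\in q$; a minimal idempotent is a non-principal $p=p+p$ in the smallest two-sided ideal of $\beta\mathbb N$; central sets are members of some minimal idempotent, and central$^*$ sets are sets belonging to every minimal idempotent. *)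

theory Defs
  imports Main
begin

text \<open>Infinite words are functions nat => nat, taking values in {0,1}; positions start at 0.\<close>

definition binary_word :: "(nat \<Rightarrow> nat) \<Rightarrow> bool" where
  "binary_word w \<longleftrightarrow> range w \<subseteq> {0, 1}"

definition factor_at :: "(nat \<Rightarrow> nat) \<Rightarrow> nat \<Rightarrow> nat \<Rightarrow> nat list" where
  "factor_at w n k = map w [n..<n + k]"

definition is_factor :: "(nat \<Rightarrow> nat) \<Rightarrow> nat list \<Rightarrow> bool" where
  "is_factor w v \<longleftrightarrow> (\<exists>n. factor_at w n (length v) = v)"

definition factors_of_length :: "(nat \<Rightarrow> nat) \<Rightarrow> nat \<Rightarrow> nat list set" where
  "factors_of_length w k = {factor_at w n k | n. True}"

definition sturmian :: "(nat \<Rightarrow> nat) \<Rightarrow> bool" where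
  "sturmian w \<longleftrightarrow> binary_word w \<and> (\<forall>k. card (factors_of_length w k) = k + 1)"

definition shift :: "nat \<Rightarrow> (nat \<Rightarrow> nat) \<Rightarrow> (nat \<Rightarrow> nat)" where
  "shift n w = (\<lambda>i. w (i + n))"

text \<open>Shift-orbit closure in the product (Cantor) topology: x is in the closure of
  {T^n w | n} iff every cylinder around x meets the orbit.\<close>
definition orbit_closure :: "(nat \<Rightarrow> nat) \<Rightarrow> (nat \<Rightarrow> nat) set" where
  "orbit_closure w = {x. \<forall>N. \<exists>n. \<forall>i<N. x i = shift n w i}"

definition left_special :: "(nat \<Rightarrow> nat) \<Rightarrow> nat list \<Rightarrow> bool" where
  "left_special w v \<longleftrightarrow> is_factor w (0 # v) \<and> is_factor w (1 # v)"

definition characteristic_word :: "(nat \<Rightarrow> nat) \<Rightarrow> (nat \<Rightarrow> nat)" where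
  "characteristic_word w =
     (THE x. x \<in> orbit_closure w \<and> (\<forall>k. left_special w (factor_at x 0 k)))"

definition nonsingular :: "(nat \<Rightarrow> nat) \<Rightarrow> bool" where
  "nonsingular w \<longleftrightarrow> (\<forall>n\<ge>1. shift n w \<noteq> characteristic_word w)"

definition occurrences :: "(nat \<Rightarrow> nat) \<Rightarrow> nat list \<Rightarrow> nat set" where
  "occurrences w u = {n. factor_at w n (length u) = u}"

definition is_prefix :: "nat list \<Rightarrow> (nat \<Rightarrow> nat) \<Rightarrow> bool" where
  "is_prefix u w \<longleftrightarrow> factor_at w 0 (length u) = u"

definition IP_set :: "nat set \<Rightarrow> bool" where
  "IP_set A \<longleftrightarrow> (\<exists>x :: nat \<Rightarrow> nat. strict_mono x \<and>
      (\<forall>F. finite F \<and> F \<noteq> {} \<longrightarrow> sum x F \<in> A))"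

definition IP_star :: "nat set \<Rightarrow> bool" where
  "IP_star A \<longleftrightarrow> (\<forall>B. IP_set B \<longrightarrow> A \<inter> B \<noteq> {})"

definition ultrafilter_nat :: "nat set set \<Rightarrow> bool" where
  "ultrafilter_nat p \<longleftrightarrow>
     UNIV \<in> p \<and> {} \<notin> p \<and>
     (\<forall>A B. A \<in> p \<and> A \<subseteq> B \<longrightarrow> B \<in> p) \<and>
     (\<forall>A B. A \<in> p \<and> B \<in> p \<longrightarrow> A \<inter> B \<in> p) \<and>
     (\<forall>A. A \<in> p \<or> - A \<in> p)"

definition betaN :: "nat set set set" where
  "betaN = {p. ultrafilter_nat p}"

text \<open>A - n = {m. m + n \<in> A}; A \<in> p + q iff {n. A - n \<in> p} \<in> q.\<close>
definition bplus :: "nat set set \<Rightarrow> nat set set \<Rightarrow> nat set set" where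
  "bplus p q = {A. {n. {m. m + n \<in> A} \<in> p} \<in> q}"

definition principal :: "nat set set \<Rightarrow> bool" where
  "principal p \<longleftrightarrow> (\<exists>n. {n} \<in> p)"

definition two_sided_ideal :: "nat set set set \<Rightarrow> bool" where
  "two_sided_ideal I \<longleftrightarrow> I \<noteq> {} \<and> I \<subseteq> betaN \<and>
     (\<forall>p\<in>I. \<forall>q\<in>betaN. bplus p q \<in> I \<and> bplus q p \<in> I)"

text \<open>The smallest two-sided ideal K(beta N) (it exists, so it equals the
  intersection of all two-sided ideals).\<close>
definition smallest_ideal :: "nat set set set" where
  "smallest_ideal = \<Inter> {I. two_sided_ideal I}"

definition minimal_idempotent :: "nat set set \<Rightarrow> bool" where
  "minimal_idempotent p \<longleftrightarrow> p \<in> betaN \<and> \<not> principal p \<and> bplus p p = p \<and>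
     p \<in> smallest_ideal"

definition central :: "nat set \<Rightarrow> bool" where
  "central A \<longleftrightarrow> (\<exists>p. minimal_idempotent p \<and> A \<in> p)"

definition central_star :: "nat set \<Rightarrow> bool" where
  "central_star A \<longleftrightarrow> (\<forall>p. minimal_idempotent p \<longrightarrow> A \<in> p)"

end

theory Submission
  imports Defs "HOL-Analysis.Kronecker_Approximation_Theorem"
begin

text \<open>A Sturmian word is balanced: factors of equal length contain numbers of ones differing
  by at most one.  So \<open>w\<close> has a slope \<open>\<alpha>\<close>, irrational because \<open>w\<close> is not eventually
  periodic, and the deviation \<open>d n\<close> (the number of ones among \<open>w 0, \<dots>, w (n - 1)\<close> minus
  \<open>n \<alpha>\<close>) takes values in an interval \<open>[\<gamma>, \<gamma> + 1]\<close>; the letter \<open>w n\<close> is read off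
  from \<open>d (n + 1) - d n\<close>.  The deviations of \<open>w\<close> and of its translate by \<open>N\<close> differ by
  \<open>N \<alpha>\<close> modulo \<open>1\<close>, so the two words agree as long as the shifted deviations stay inside the
  interval.  If the deviation reached an endpoint, a shift of \<open>w\<close> would be the characteristic
  word; hence for nonsingular \<open>w\<close> every \<open>N\<close> with \<open>N \<alpha>\<close> close enough to an integer is an
  occurrence of a given prefix.  For two words these \<open>N\<close> contain a Bohr neighbourhood of \<open>0\<close>
  for \<open>(\<alpha>, \<alpha>')\<close>, which every IP-set meets by pigeonhole on partial sums.  Finally IP\<open>\<^sup>*\<close>
  sets are central\<open>\<^sup>*\<close> because every member of an idempotent ultrafilter is an IP-set
  (Galvin--Glazer).\<close>

lemma factor_at_length [simp]: "length (factor_at w n k) = k"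
  by (simp add: factor_at_def)

lemma factor_at_nth [simp]: "i < k \<Longrightarrow> factor_at w n k ! i = w (n + i)"
  by (simp add: factor_at_def)

lemma factor_at_0 [simp]: "factor_at w n 0 = []"
  by (simp add: factor_at_def)

lemma factor_at_eq_iff: "factor_at w n k = factor_at v m k \<longleftrightarrow> (\<forall>i<k. w (n + i) = v (m + i))"
  by (simp add: list_eq_iff_nth_eq)

lemma factor_at_Suc: "factor_at w n (Suc k) = factor_at w n k @ [w (n + k)]"
  by (simp add: factor_at_def)

lemma factor_at_Suc_Cons: "factor_at w n (Suc k) = w n # factor_at w (Suc n) k"
  by (rule nth_equalityI) (auto simp: nth_Cons split: nat.splits)

lemma factor_at_Suc_Suc:
  "factor_at w n (Suc (Suc k)) = w n # factor_at w (Suc n) k @ [w (Suc n + k)]"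
  by (simp only: factor_at_Suc_Cons[of w n "Suc k"] factor_at_Suc[of w "Suc n" k])

lemma factor_at_add: "factor_at w n (k + l) = factor_at w n k @ factor_at w (n + k) l"
  by (rule nth_equalityI) (auto simp: nth_append add.assoc)

lemma take_factor_at: "k \<le> l \<Longrightarrow> take k (factor_at w n l) = factor_at w n k"
  by (auto simp: list_eq_iff_nth_eq)

lemma factor_at_inner:
  assumes "factor_at w p (length u) = u" "i + l \<le> length u"
  shows "factor_at w (p + i) l = take l (drop i u)"
proof -
  have "u ! k = w (p + k)" if "k < length u" for k
    using that factor_at_nth[of k "length u" w p] assms(1) by simp
  then show ?thesis using assms(2) by (intro nth_equalityI) (auto simp: add.assoc)
qed

lemma factor_at_shift: "factor_at (shift s w) n k = factor_at w (n + s) k"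
  by (auto simp: list_eq_iff_nth_eq shift_def algebra_simps)

lemma factor_at_in_factors_of_length [simp]: "factor_at w n k \<in> factors_of_length w k"
  by (auto simp: factors_of_length_def)

lemma is_factor_factor_at [simp]: "is_factor w (factor_at w n k)"
  by (auto simp: is_factor_def)

lemma is_factor_iff_in_factors_of_length: "is_factor w v \<longleftrightarrow> v \<in> factors_of_length w (length v)"
  unfolding is_factor_def factors_of_length_def by (auto intro: sym)

lemma is_factor_append: "is_factor w (u @ v) \<Longrightarrow> is_factor w u \<and> is_factor w v"
proof -
  assume "is_factor w (u @ v)"
  then obtain n where "factor_at w n (length u) @ factor_at w (n + length u) (length v) = u @ v"
    by (auto simp: is_factor_def factor_at_add)
  then have "factor_at w n (length u) = u" "factor_at w (n + length u) (length v) = v"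
    by (auto simp: append_eq_append_conv)
  then show ?thesis by (auto simp: is_factor_def)
qed

lemma is_factor_ConsD: "is_factor w (a # v) \<Longrightarrow> is_factor w v"
  using is_factor_append[of w "[a]" v] by simp

lemma is_factor_snocD: "is_factor w (v @ [a]) \<Longrightarrow> is_factor w v"
  using is_factor_append[of w v "[a]"] by simp

lemma is_factor_take: "is_factor w v \<Longrightarrow> is_factor w (take k v)"
  using is_factor_append[of w "take k v" "drop k v"] by simp

lemma is_factor_drop: "is_factor w v \<Longrightarrow> is_factor w (drop k v)"
  using is_factor_append[of w "take k v" "drop k v"] by simp

lemma factors_of_length_0: "factors_of_length w 0 = {[]}"
  by (auto simp: factors_of_length_def)

lemma factors_of_length_butlast: "factors_of_length w k = butlast ` factors_of_length w (Suc k)"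
proof
  show "factors_of_length w k \<subseteq> butlast ` factors_of_length w (Suc k)"
  proof
    fix v assume "v \<in> factors_of_length w k"
    then obtain n where "v = butlast (factor_at w n (Suc k))"
      by (auto simp: factors_of_length_def factor_at_Suc)
    then show "v \<in> butlast ` factors_of_length w (Suc k)" by auto
  qed
qed (auto simp: factors_of_length_def factor_at_Suc)

lemma card_factors_of_length_mono:
  "finite (factors_of_length w (Suc k)) \<Longrightarrow>
     card (factors_of_length w k) \<le> card (factors_of_length w (Suc k))"
  using factors_of_length_butlast[of w k] card_image_le by metis

section \<open>Eventually periodic words and the Morse--Hedlund theorem\<close>

lemma eventually_periodic_iterate:
  fixes w :: "nat \<Rightarrow> 'a" and t p :: nat
  assumes "\<forall>n\<ge>N. w (n + p) = w n" "n \<ge> N"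
  shows "w (n + t * p) = w n"
proof (induction t)
  case (Suc t)
  have "w (n + t * p + p) = w (n + t * p)" using assms by simp
  then show ?case using Suc by (simp add: algebra_simps)
qed simp

lemma factors_of_eventually_periodic:
  assumes "\<forall>n\<ge>N. w (n + p) = w n" "p > 0"
  shows "factors_of_length w k \<subseteq> (\<lambda>n. factor_at w n k) ` {..<N + p}"
proof
  fix v assume "v \<in> factors_of_length w k"
  then obtain n where v: "v = factor_at w n k" by (auto simp: factors_of_length_def)
  show "v \<in> (\<lambda>n. factor_at w n k) ` {..<N + p}"
  proof (cases "n < N + p")
    case True
    then show ?thesis using v by auto
  next
    case False
    define m where "m = N + (n - N) mod p"
    define t where "t = (n - N) div p"
    have "(n - N) div p * p + (n - N) mod p = n - N" by (rule div_mult_mod_eq)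
    then have n_eq: "n = m + t * p" unfolding m_def t_def using False by linarith
    have "factor_at w n k = factor_at w m k"
      unfolding factor_at_eq_iff
    proof (intro allI impI)
      fix i
      have "w (m + i + t * p) = w (m + i)"
        by (rule eventually_periodic_iterate[OF assms(1)]) (simp add: m_def)
      then show "w (n + i) = w (m + i)" by (simp add: n_eq algebra_simps)
    qed
    moreover have "m < N + p" unfolding m_def using assms(2) by simp
    ultimately show ?thesis using v by auto
  qed
qed

lemma card_factors_eventually_periodic:
  assumes "\<forall>n\<ge>N. w (n + p) = w n" "p > 0"
  shows "card (factors_of_length w k) \<le> N + p"
proof -
  have "card (factors_of_length w k) \<le> card ((\<lambda>n. factor_at w n k) ` {..<N + p})"
    by (rule card_mono[OF _ factors_of_eventually_periodic[OF assms]]) simp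
  also have "\<dots> \<le> N + p" using card_image_le[of "{..<N + p}"] by simp
  finally show ?thesis .
qed

text \<open>Once the right extension of factors of length \<open>k\<close> is unique, the factor of
  length \<open>k\<close> at a position determines the whole suffix from that position on.\<close>

lemma eventually_periodic_if_unique_right_extension:
  assumes fin: "finite (factors_of_length w (Suc k))"
    and inj: "inj_on butlast (factors_of_length w (Suc k))"
    and "n < m" and eq: "factor_at w n k = factor_at w m k"
  shows "\<forall>t\<ge>n + k. w (t + (m - n)) = w t"
proof -
  have step: "w (n' + k) = w (m' + k) \<and> factor_at w (Suc n') k = factor_at w (Suc m') k"
    if "factor_at w n' k = factor_at w m' k" for n' m'
  proof -
    have "butlast (factor_at w n' (Suc k)) = butlast (factor_at w m' (Suc k))"
      using that by (simp add: factor_at_Suc)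
    then have "factor_at w n' (Suc k) = factor_at w m' (Suc k)"
      using inj by (auto simp: inj_on_def)
    then show ?thesis
      using factor_at_Suc_Cons[of w n' k] factor_at_Suc_Cons[of w m' k] by (simp add: factor_at_Suc)
  qed
  have all: "factor_at w (n + i) k = factor_at w (m + i) k" for i
  proof (induction i)
    case (Suc i)
    then show ?case using step[OF Suc.IH] by simp
  qed (use eq in simp)
  show ?thesis
  proof (intro allI impI)
    fix t assume "t \<ge> n + k"
    define i where "i = t - n - k"
    have "t = n + i + k" "t + (m - n) = m + i + k"
      using \<open>n < m\<close> \<open>t \<ge> n + k\<close> by (simp_all add: i_def)
    then show "w (t + (m - n)) = w t" using step[OF all[of i]] by (simp add: algebra_simps)
  qed
qed

theorem morse_hedlund:
  assumes fin: "\<And>j. finite (factors_of_length w j)"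
    and k: "card (factors_of_length w k) \<le> k"
  shows "\<exists>N p. p > 0 \<and> (\<forall>n\<ge>N. w (n + p) = w n)"
proof -
  let ?F = "factors_of_length w"
  have "\<exists>j<k. card (?F (Suc j)) \<le> card (?F j)"
  proof (rule ccontr)
    assume growth: "\<not> (\<exists>j<k. card (?F (Suc j)) \<le> card (?F j))"
    have "j + 1 \<le> card (?F j)" if "j \<le> k" for j
      using that
    proof (induction j)
      case (Suc j)
      have "card (?F j) < card (?F (Suc j))" using growth Suc.prems by (simp add: not_le)
      with Suc show ?case by simp
    qed (simp add: factors_of_length_0)
    then have "k + 1 \<le> card (?F k)" by simp
    then show False using k by simp
  qed
  then obtain j where j: "card (?F (Suc j)) \<le> card (?F j)" by auto
  have "card (butlast ` ?F (Suc j)) = card (?F (Suc j))"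
    using j card_factors_of_length_mono[OF fin, of j] factors_of_length_butlast[of w j] by simp
  then have inj: "inj_on butlast (?F (Suc j))" by (rule eq_card_imp_inj_on[OF fin])
  have "\<not> inj_on (\<lambda>n. factor_at w n j) {..card (?F j)}"
  proof
    assume "inj_on (\<lambda>n. factor_at w n j) {..card (?F j)}"
    then have "card ((\<lambda>n. factor_at w n j) ` {..card (?F j)}) = card (?F j) + 1"
      by (simp add: card_image)
    moreover have "card ((\<lambda>n. factor_at w n j) ` {..card (?F j)}) \<le> card (?F j)"
      by (rule card_mono[OF fin]) auto
    ultimately show False by linarith
  qed
  then obtain n0 m0 where nm0: "n0 \<noteq> m0" "factor_at w n0 j = factor_at w m0 j"
    unfolding inj_on_def by blast
  obtain n m where "n < m" "factor_at w n j = factor_at w m j"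
  proof (cases "n0 < m0")
    case True
    then show ?thesis using nm0 that by blast
  next
    case False
    then show ?thesis using nm0 that[of m0 n0] by simp
  qed
  then have "\<forall>t\<ge>n + j. w (t + (m - n)) = w t" "m - n > 0"
    using eventually_periodic_if_unique_right_extension[OF fin inj] by auto
  then show ?thesis by (intro exI[of _ "n + j"] exI[of _ "m - n"]) simp
qed

section \<open>Factors of a Sturmian word\<close>

definition right_special :: "(nat \<Rightarrow> nat) \<Rightarrow> nat list \<Rightarrow> bool" where
  "right_special w v \<longleftrightarrow> is_factor w (v @ [0]) \<and> is_factor w (v @ [1])"

definition bispecial :: "(nat \<Rightarrow> nat) \<Rightarrow> nat list \<Rightarrow> bool" where
  "bispecial w v \<longleftrightarrow> left_special w v \<and> right_special w v"

definition mixed_extensions :: "(nat \<Rightarrow> nat) \<Rightarrow> nat list \<Rightarrow> bool" where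
  "mixed_extensions w v \<longleftrightarrow> is_factor w (0 # v @ [1]) \<and> is_factor w (1 # v @ [0])"

lemma left_special_append: "left_special w (u @ v) \<Longrightarrow> left_special w u"
  unfolding left_special_def
  using is_factor_append[of w "0 # u" v] is_factor_append[of w "1 # u" v] by simp

lemma right_special_append: "right_special w (u @ v) \<Longrightarrow> right_special w v"
  unfolding right_special_def
  using is_factor_append[of w u "v @ [0]"] is_factor_append[of w u "v @ [1]"] by simp

lemma card_image_two_collisions:
  assumes "finite A" "f ` A = B" "x1 \<in> A" "x2 \<in> A" "y1 \<in> A" "y2 \<in> A"
    "x1 \<noteq> x2" "y1 \<noteq> y2" "f x1 = f x2" "f y1 = f y2" "f x1 \<noteq> f y1"
  shows "card B + 2 \<le> card A"
proof -
  let ?A = "A - {x1, y1}"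
  have "B \<subseteq> f ` ?A"
  proof
    fix b assume "b \<in> B"
    then obtain a where a: "a \<in> A" "b = f a" using assms(2) by auto
    consider "a = x1" | "a = y1" | "a \<in> ?A" using a by blast
    then show "b \<in> f ` ?A"
    proof cases
      case 1
      then have "x2 \<in> ?A" "b = f x2" using assms a by auto
      then show ?thesis by blast
    next
      case 2
      then have "y2 \<in> ?A" "b = f y2" using assms a by auto
      then show ?thesis by blast
    qed (use a in auto)
  qed
  then have "card B \<le> card (f ` ?A)" by (intro card_mono) (use assms in auto)
  also have "\<dots> \<le> card ?A" by (intro card_image_le) (use assms in auto)
  also have "card ?A = card A - card {x1, y1}" using assms by (subst card_Diff_subset) auto
  moreover have "x1 \<noteq> y1" using assms by auto
  then have "card {x1, y1} = 2" by simp
  moreover have "card {x1, y1} \<le> card A" using assms by (intro card_mono) auto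
  ultimately show ?thesis by linarith
qed

lemma card_image_triple_collision:
  assumes "finite A" "f ` A = B" "x1 \<in> A" "x2 \<in> A" "x3 \<in> A" "x4 \<in> A"
    "distinct [x1, x2, x3, x4]" "f x1 = f x4" "f x2 = f x4" "f x3 = f x4"
  shows "card B + 3 \<le> card A"
proof -
  let ?A = "A - {x1, x2, x3}"
  have "B \<subseteq> f ` ?A"
  proof
    fix b assume "b \<in> B"
    then obtain a where a: "a \<in> A" "b = f a" using assms(2) by auto
    show "b \<in> f ` ?A"
    proof (cases "a \<in> {x1, x2, x3}")
      case True
      then have "x4 \<in> ?A" "b = f x4" using assms a by auto
      then show ?thesis by blast
    qed (use a in auto)
  qed
  then have "card B \<le> card (f ` ?A)" by (intro card_mono) (use assms in auto)
  also have "\<dots> \<le> card ?A" by (intro card_image_le) (use assms in auto)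
  also have "card ?A = card A - 3" using assms by (subst card_Diff_subset) auto
  moreover have "card {x1, x2, x3} \<le> card A" using assms by (intro card_mono) auto
  moreover have "card {x1, x2, x3} = 3" using assms by auto
  ultimately show ?thesis by linarith
qed

locale sturmian_word =
  fixes w :: "nat \<Rightarrow> nat"
  assumes sturmian: "sturmian w"
begin

abbreviation F :: "nat \<Rightarrow> nat list set" where
  "F \<equiv> factors_of_length w"

lemma finite_factors: "finite (F k)"
  using sturmian unfolding sturmian_def by (intro card_ge_0_finite) simp

lemma card_factors: "card (F k) = k + 1"
  using sturmian unfolding sturmian_def by simp

lemma letter: "w i = 0 \<or> w i = 1"
  using sturmian by (auto simp: sturmian_def binary_word_def)

lemma factor_letter: "is_factor w v \<Longrightarrow> i < length v \<Longrightarrow> v ! i = 0 \<or> v ! i = 1"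
  using letter by (auto simp: is_factor_def) (metis factor_at_nth)

lemma not_eventually_periodic: "p > 0 \<Longrightarrow> \<not> (\<forall>n\<ge>N. w (n + p) = w n)"
  using card_factors_eventually_periodic[of N w p "N + p"] card_factors by force

text \<open>Deleting the first letter of \<open>w\<close> loses at most one factor of each length, so a
  factor occurring only at position 0 would give the shifted word complexity \<open>\<le> k\<close>.\<close>

lemma factor_reoccurs:
  assumes "is_factor w v"
  shows "\<exists>n\<ge>1. factor_at w n (length v) = v"
proof (rule ccontr)
  assume no: "\<not> ?thesis"
  let ?L = "length v"
  define y where "y = shift 1 w"
  have Fy: "factors_of_length y j \<subseteq> F j" for j
    by (auto simp: factors_of_length_def y_def factor_at_shift)
  have finite_Fy: "finite (factors_of_length y j)" for j
    using Fy finite_subset finite_factors by blast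
  have "factors_of_length y ?L \<subseteq> F ?L - {v}"
    using no by (auto simp: factors_of_length_def y_def factor_at_shift)
  then have "card (factors_of_length y ?L) \<le> card (F ?L - {v})"
    by (rule card_mono[rotated]) (simp add: finite_factors)
  also have "\<dots> = ?L"
    using assms card_factors finite_factors
    by (simp add: is_factor_iff_in_factors_of_length card_Diff_singleton)
  finally obtain N p where "p > 0" "\<forall>n\<ge>N. y (n + p) = y n"
    using morse_hedlund[OF finite_Fy] by blast
  then have "\<forall>n\<ge>N + 1. w (n + p) = w n"
  proof (intro allI impI)
    fix n assume "n \<ge> N + 1" and periodic: "\<forall>n\<ge>N. y (n + p) = y n"
    then have "n - 1 \<ge> N" by simp
    then have "y (n - 1 + p) = y (n - 1)" using periodic by blast
    then show "w (n + p) = w n" using \<open>n \<ge> N + 1\<close> by (simp add: y_def shift_def)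
  qed
  then show False using not_eventually_periodic[OF \<open>p > 0\<close>] by blast
qed

lemma factor_occurs_beyond:
  assumes "is_factor w v"
  shows "\<exists>n\<ge>M. factor_at w n (length v) = v"
proof (induction M)
  case 0
  then show ?case using assms by (auto simp: is_factor_def)
next
  case (Suc M)
  then obtain n where n: "n \<ge> M" "factor_at w n (length v) = v" by auto
  obtain m where "m \<ge> 1" "factor_at w m (n + length v) = factor_at w 0 (n + length v)"
    using factor_reoccurs[of "factor_at w 0 (n + length v)"] by auto
  then have "factor_at w (m + n) (length v) = factor_at w n (length v)"
    by (simp add: factor_at_eq_iff add.assoc)
  then show ?case using n \<open>m \<ge> 1\<close> by (intro exI[of _ "m + n"]) auto
qed

lemma tl_factors: "tl ` F (Suc k) = F k"
proof
  show "F k \<subseteq> tl ` F (Suc k)"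
  proof
    fix v assume "v \<in> F k"
    then have "is_factor w v" "length v = k"
      by (auto simp: is_factor_def factors_of_length_def)
    then obtain n where "n \<ge> 1" "factor_at w n k = v" using factor_reoccurs by blast
    then have "factor_at w (n - 1) (Suc k) = w (n - 1) # v" by (simp add: factor_at_Suc_Cons)
    then show "v \<in> tl ` F (Suc k)"
      by (metis factor_at_in_factors_of_length image_eqI list.sel(3))
  qed
qed (auto simp: factors_of_length_def factor_at_Suc_Cons)

lemma inner_factors: "(\<lambda>z. tl (butlast z)) ` F (Suc (Suc k)) = F k"
proof -
  have "(\<lambda>z. tl (butlast z)) ` F (Suc (Suc k)) = tl ` butlast ` F (Suc (Suc k))"
    by (simp add: image_image)
  also have "\<dots> = F k" by (simp flip: factors_of_length_butlast add: tl_factors)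
  finally show ?thesis .
qed

lemma left_special_unique:
  assumes "left_special w u" "left_special w v" "length u = length v"
  shows "u = v"
proof (rule ccontr)
  assume "u \<noteq> v"
  have mem: "0 # u \<in> F (Suc (length u))" "1 # u \<in> F (Suc (length u))"
    "0 # v \<in> F (Suc (length u))" "1 # v \<in> F (Suc (length u))"
    using assms by (auto simp: left_special_def is_factor_iff_in_factors_of_length)
  have "card (F (length u)) + 2 \<le> card (F (Suc (length u)))"
    by (rule card_image_two_collisions[OF finite_factors tl_factors mem]) (use \<open>u \<noteq> v\<close> in auto)
  then show False using card_factors by simp
qed

lemma right_special_unique:
  assumes "right_special w u" "right_special w v" "length u = length v"
  shows "u = v"
proof (rule ccontr)
  assume "u \<noteq> v"
  have mem: "u @ [0] \<in> F (Suc (length u))" "u @ [1] \<in> F (Suc (length u))"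
    "v @ [0] \<in> F (Suc (length u))" "v @ [1] \<in> F (Suc (length u))"
    using assms by (auto simp: right_special_def is_factor_iff_in_factors_of_length)
  have "card (F (length u)) + 2 \<le> card (F (Suc (length u)))"
    by (rule card_image_two_collisions[OF finite_factors factors_of_length_butlast[symmetric] mem])
      (use \<open>u \<noteq> v\<close> in auto)
  then show False using card_factors by simp
qed

lemma not_all_two_sided_extensions:
  "\<not> (is_factor w (0 # v @ [0]) \<and> is_factor w (0 # v @ [1]) \<and>
      is_factor w (1 # v @ [0]) \<and> is_factor w (1 # v @ [1]))"
proof
  let ?k = "Suc (Suc (length v))"
  assume "is_factor w (0 # v @ [0]) \<and> is_factor w (0 # v @ [1]) \<and>
      is_factor w (1 # v @ [0]) \<and> is_factor w (1 # v @ [1])"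
  then have mem: "0 # v @ [0] \<in> F ?k" "0 # v @ [1] \<in> F ?k" "1 # v @ [0] \<in> F ?k" "1 # v @ [1] \<in> F ?k"
    by (auto simp: is_factor_iff_in_factors_of_length)
  have "card (F (length v)) + 3 \<le> card (F ?k)"
    by (rule card_image_triple_collision[OF finite_factors inner_factors mem]) auto
  then show False using card_factors by simp
qed

lemma letter_factor: "a \<in> {0, 1} \<Longrightarrow> is_factor w [a]"
proof -
  assume a: "a \<in> {0, 1}"
  have "F 1 \<subseteq> {[0], [1]}"
  proof
    fix z assume "z \<in> F 1"
    then obtain n where "z = [w n]" by (auto simp: factors_of_length_def factor_at_def)
    then show "z \<in> {[0], [1]}" using letter[of n] by auto
  qed
  moreover have "card (F 1) = 2" using card_factors[of 1] by simp
  ultimately have "F 1 = {[0], [1]}"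
    using card_subset_eq[of "{[0], [1]}" "F 1"] by simp
  then show ?thesis using a by (auto simp: is_factor_iff_in_factors_of_length)
qed

lemma two_letter_factor:
  assumes ab: "a \<in> {0, 1}" "b \<in> {0, 1}" "a \<noteq> b"
  shows "is_factor w [a, b]"
proof -
  obtain n where "factor_at w n 1 = [a]"
    using letter_factor[OF ab(1)] by (auto simp: is_factor_def)
  then have wn: "w n = a" by (simp add: factor_at_def)
  have "\<exists>m\<ge>n. w m = b"
  proof (rule ccontr)
    assume "\<not> ?thesis"
    then have "\<forall>m\<ge>n. w m = a" using ab letter by (metis insertE singletonD)
    then show False using not_eventually_periodic[of 1 n] by simp
  qed
  then obtain m where m: "m \<ge> n" "w m = b" by auto
  define m0 where "m0 = (LEAST m. m \<ge> n \<and> w m = b)"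
  have m0: "m0 \<ge> n" "w m0 = b"
    using LeastI[of "\<lambda>m. m \<ge> n \<and> w m = b" m] m by (auto simp: m0_def)
  have "m0 \<noteq> n" using m0 wn ab by auto
  have "w (m0 - 1) = a"
  proof (cases "m0 - 1 = n")
    case False
    then have "\<not> (m0 - 1 \<ge> n \<and> w (m0 - 1) = b)"
      using not_less_Least[of "m0 - 1" "\<lambda>m. m \<ge> n \<and> w m = b"] \<open>m0 \<noteq> n\<close> m0
      by (auto simp: m0_def)
    then show ?thesis using ab letter[of "m0 - 1"] \<open>m0 \<noteq> n\<close> m0 by auto
  qed (use wn in simp)
  moreover have "Suc (m0 - 1) = m0" using m0 \<open>m0 \<noteq> n\<close> by simp
  ultimately have "factor_at w (m0 - 1) 2 = [a, b]"
    using m0 by (simp add: numeral_2_eq_2 factor_at_Suc_Cons)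
  then show ?thesis by (metis is_factor_factor_at)
qed

lemma mixed_extensions_Nil: "mixed_extensions w []"
  unfolding mixed_extensions_def using two_letter_factor[of 0 1] two_letter_factor[of 1 0] by simp

lemma bispecial_Nil: "bispecial w []"
  unfolding bispecial_def left_special_def right_special_def using letter_factor by simp

end

text \<open>\<open>v\<close> is the longest bispecial proper prefix of the bispecial factor \<open>v'\<close>, and \<open>a\<close> is
  the letter following it in \<open>v'\<close>.  No factor strictly between them is right special, so every
  occurrence of \<open>v a\<close> extends to one of \<open>v'\<close>; as \<open>v a\<close> is the only left special factor of
  its length, every occurrence of \<open>a v\<close> is preceded by the rest of \<open>v'\<close>.  Mixed extensions of
  \<open>v\<close> then propagate to \<open>v'\<close>, since otherwise \<open>w\<close> would be eventually periodic.\<close>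

locale consecutive_bispecials = sturmian_word +
  fixes v v' :: "nat list" and n m gap a b :: nat
  assumes bispecial_v: "bispecial w v"
    and mixed_v: "mixed_extensions w v"
    and bispecial_v': "bispecial w v'"
    and prefix: "take (length v) v' = v"
    and longer: "length v < length v'"
    and none_between: "\<And>j. length v < j \<Longrightarrow> j < length v' \<Longrightarrow> \<not> bispecial w (take j v')"
  defines "n \<equiv> length v" and "m \<equiv> length v'" and "gap \<equiv> m - n"
    and "a \<equiv> v' ! n" and "b \<equiv> 1 - a"
begin

lemma gap: "gap \<ge> 1" "m = n + gap"
  using longer by (auto simp: n_def m_def gap_def)

lemma take_Suc_v': "take (Suc n) v' = v @ [a]"
  using prefix longer by (simp add: n_def a_def take_Suc_conv_app_nth)

lemma left_special_take: "left_special w (take j v')"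
  using left_special_append[of w "take j v'" "drop j v'"] bispecial_v'
  by (simp add: bispecial_def)

lemma left_special_va: "left_special w (v @ [a])"
  using left_special_take[of "Suc n"] take_Suc_v' by simp

lemma letters_ab: "(a = 0 \<and> b = 1) \<or> (a = 1 \<and> b = 0)"
proof -
  have "is_factor w (v @ [a])"
    using left_special_va by (auto simp: left_special_def dest: is_factor_ConsD)
  then have "a = 0 \<or> a = 1" using factor_letter[of "v @ [a]" n] by (simp add: n_def)
  then show ?thesis by (auto simp: b_def)
qed

lemma factor_ava: "is_factor w (a # v @ [a])"
  and factor_bva: "is_factor w (b # v @ [a])"
  and factor_avb: "is_factor w (a # v @ [b])"
  using left_special_va mixed_v letters_ab by (auto simp: left_special_def mixed_extensions_def)

lemma suffix_v': "drop (gap - 1) v' = a # v"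
proof (rule right_special_unique)
  show "right_special w (drop (gap - 1) v')"
    using right_special_append[of w "take (gap - 1) v'" "drop (gap - 1) v'"] bispecial_v'
    by (simp add: bispecial_def)
  show "right_special w (a # v)"
    using factor_ava factor_avb letters_ab by (auto simp: right_special_def)
  show "length (drop (gap - 1) v') = length (a # v)" using gap by (simp add: m_def n_def)
qed

lemma not_right_special_between: "n < j \<Longrightarrow> j < m \<Longrightarrow> \<not> right_special w (take j v')"
  using none_between[of j] left_special_take[of j] by (auto simp: bispecial_def n_def m_def)

lemma forced_right_extension:
  assumes "n < j" "j < m" "factor_at w p j = take j v'"
  shows "w (p + j) = v' ! j"
proof -
  have tj: "take (Suc j) v' = take j v' @ [v' ! j]"
    using assms by (simp add: take_Suc_conv_app_nth m_def)
  have "is_factor w (take (Suc j) v')"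
    using left_special_take[of "Suc j"] by (auto simp: left_special_def dest: is_factor_ConsD)
  moreover have "is_factor w (take j v' @ [w (p + j)])"
    using assms(3) factor_at_Suc[of w p j] by (metis is_factor_factor_at)
  moreover have "v' ! j = 0 \<or> v' ! j = 1"
    using factor_letter[OF \<open>is_factor w (take (Suc j) v')\<close>, of j] tj assms by (simp add: m_def nth_append)
  ultimately show ?thesis
    using tj letter[of "p + j"] not_right_special_between[OF assms(1,2)]
    by (auto simp: right_special_def)
qed

lemma occurrence_extends_right:
  assumes "factor_at w p (Suc n) = v @ [a]"
  shows "factor_at w p m = v'"
proof -
  have "factor_at w p (Suc n + d) = take (Suc n + d) v'" if "Suc n + d \<le> m" for d
    using that
  proof (induction d)
    case 0
    then show ?case using assms take_Suc_v' by simp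
  next
    case (Suc d)
    then have "w (p + (Suc n + d)) = v' ! (Suc n + d)"
      by (intro forced_right_extension) simp_all
    then show ?case
      using Suc by (simp add: factor_at_Suc take_Suc_conv_app_nth m_def)
  qed
  from this[of "gap - 1"] show ?thesis using gap by (simp add: m_def)
qed

lemma no_inner_occurrence:
  assumes "1 \<le> i" "i < gap"
  shows "take (Suc n) (drop i v') \<noteq> v @ [a]"
proof
  assume inner: "take (Suc n) (drop i v') = v @ [a]"
  have "is_factor w (take (m - i) v' @ [e])" if extension: "is_factor w (v' @ [e])" for e
  proof -
    obtain q where q: "factor_at w q (Suc m) = v' @ [e]"
      using extension by (auto simp: is_factor_def m_def)
    then have v'_at_q: "factor_at w q m = v'" and "w (q + m) = e"
      by (auto simp: factor_at_Suc)
    have "factor_at w (q + i) (Suc n) = v @ [a]"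
      using factor_at_inner[of w q v' i "Suc n"] v'_at_q inner assms gap by (simp add: m_def)
    then have "factor_at w (q + i) m = v'" by (rule occurrence_extends_right)
    then have "factor_at w (q + i) (m - i) = take (m - i) v'"
      by (auto simp: list_eq_iff_nth_eq)
    then have "factor_at w (q + i) (Suc (m - i)) = take (m - i) v' @ [e]"
      using \<open>w (q + m) = e\<close> assms gap by (simp add: factor_at_Suc)
    then show ?thesis by (metis is_factor_factor_at)
  qed
  then have "right_special w (take (m - i) v')"
    using bispecial_v' by (auto simp: bispecial_def right_special_def)
  moreover have "n < m - i" "m - i < m" using assms gap by auto
  ultimately show False using not_right_special_between by blast
qed

lemma forced_left_extension:
  assumes "1 \<le> i" "i < gap" "1 \<le> q" "factor_at w q (Suc n) = take (Suc n) (drop i v')"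
  shows "w (q - 1) = v' ! (i - 1)"
proof (rule ccontr)
  assume differ: "w (q - 1) \<noteq> v' ! (i - 1)"
  have drop_i: "drop (i - 1) v' = v' ! (i - 1) # drop i v'"
    using Cons_nth_drop_Suc[of "i - 1" v'] assms gap by (simp add: m_def)
  have "factor_at w (q - 1) (Suc (Suc n)) = w (q - 1) # take (Suc n) (drop i v')"
    using assms(3,4) factor_at_Suc_Cons[of w "q - 1" "Suc n"] by simp
  then have f1: "is_factor w (w (q - 1) # take (Suc n) (drop i v'))"
    by (metis is_factor_factor_at)
  have "is_factor w (take (Suc (Suc n)) (drop (i - 1) v'))"
    using bispecial_v'
    by (auto simp: bispecial_def left_special_def dest!: is_factor_ConsD intro!: is_factor_take is_factor_drop)
  then have f2: "is_factor w (v' ! (i - 1) # take (Suc n) (drop i v'))"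
    using drop_i by simp
  then have "v' ! (i - 1) = 0 \<or> v' ! (i - 1) = 1" using factor_letter[OF f2, of 0] by simp
  then have "left_special w (take (Suc n) (drop i v'))"
    using f1 f2 differ letter[of "q - 1"] by (auto simp: left_special_def)
  then have "take (Suc n) (drop i v') = v @ [a]"
    by (rule left_special_unique[OF _ left_special_va]) (use assms gap in \<open>simp add: m_def n_def\<close>)
  then show False using no_inner_occurrence[OF assms(1,2)] by simp
qed

lemma occurrence_extends_left:
  assumes "gap - 1 \<le> r" "factor_at w r (Suc n) = a # v"
  shows "factor_at w (r - (gap - 1)) m = v'"
proof -
  have "factor_at w (r - d) (Suc n + d) = drop (gap - 1 - d) v'" if "d \<le> gap - 1" for d
    using that
  proof (induction d)
    case 0
    then show ?case using assms suffix_v' by simp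
  next
    case (Suc d)
    define i where "i = gap - 1 - d"
    have i: "1 \<le> i" "i < gap" and q: "1 \<le> r - d" using Suc.prems assms(1) by (auto simp: i_def)
    have IH: "factor_at w (r - d) (Suc n + d) = drop i v'" using Suc by (simp add: i_def)
    have "w (r - d - 1) = v' ! (i - 1)"
      using forced_left_extension[OF i q] take_factor_at[of "Suc n" "Suc n + d" w "r - d"] IH by simp
    moreover have "Suc (r - d - 1) = r - d" using q by simp
    then have "factor_at w (r - d - 1) (Suc (Suc n + d)) = w (r - d - 1) # factor_at w (r - d) (Suc n + d)"
      by (simp only: factor_at_Suc_Cons)
    moreover have "drop (i - 1) v' = v' ! (i - 1) # drop i v'"
      using Cons_nth_drop_Suc[of "i - 1" v'] i gap by (simp add: m_def)
    moreover have "r - d - 1 = r - Suc d" "i - 1 = gap - 1 - Suc d" by (simp_all add: i_def)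
    ultimately show ?case using IH by simp
  qed
  from this[of "gap - 1"] show ?thesis using gap by (simp add: m_def)
qed

end

context consecutive_bispecials
begin

lemma occurrence_after_a_repeats:
  assumes no_av'b: "\<not> is_factor w (a # v' @ [b])"
    and "w p = a" "factor_at w (Suc p) m = v'"
  shows "w (p + gap) = a \<and> factor_at w (Suc (p + gap)) m = v'"
proof -
  have "w (Suc p + m) \<noteq> b"
  proof
    assume "w (Suc p + m) = b"
    then have "factor_at w p (Suc (Suc m)) = a # v' @ [b]"
      using assms(2,3) by (simp add: factor_at_Suc_Suc)
    then show False using no_av'b by (metis is_factor_factor_at)
  qed
  then have wa: "w (Suc p + m) = a" using letter[of "Suc p + m"] letters_ab by auto
  have "factor_at w (Suc p + (gap - 1)) (Suc n) = a # v"
    using factor_at_inner[of w "Suc p" v' "gap - 1" "Suc n"] assms(3) suffix_v' gap by (simp add: m_def n_def)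
  then have a_v: "w (p + gap) = a" "factor_at w (Suc (p + gap)) n = v"
    using gap by (simp_all add: factor_at_Suc_Cons)
  then have "factor_at w (Suc (p + gap)) (Suc n) = v @ [a]"
    using wa gap by (simp add: factor_at_Suc algebra_simps)
  then show ?thesis using a_v occurrence_extends_right by simp
qed

lemma factor_av'b: "is_factor w (a # v' @ [b])"
proof (rule ccontr)
  assume no_av'b: "\<not> is_factor w (a # v' @ [b])"
  obtain p0 where p0: "factor_at w p0 (Suc (Suc n)) = a # v @ [a]"
    using factor_ava by (auto simp: is_factor_def n_def)
  have start: "w p0 = a" "factor_at w (Suc p0) m = v'"
    using p0 occurrence_extends_right[of "Suc p0"] by (simp_all add: factor_at_Suc_Cons)
  have block: "w (p0 + k * gap) = a \<and> factor_at w (Suc (p0 + k * gap)) m = v'" for k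
  proof (induction k)
    case (Suc k)
    then show ?case
      using occurrence_after_a_repeats[OF no_av'b, of "p0 + k * gap"] by (simp add: algebra_simps)
  qed (use start in simp)
  have block_letters: "w (p0 + k * gap + t) = (a # v') ! t" if "t < gap" for k t
  proof (cases t)
    case (Suc t')
    then have "t' < m" using that gap by simp
    then show ?thesis using block[of k] Suc by (auto simp: list_eq_iff_nth_eq)
  qed (use block in simp)
  have "\<forall>q\<ge>p0. w (q + gap) = w q"
  proof (intro allI impI)
    fix q assume "q \<ge> p0"
    define k where "k = (q - p0) div gap"
    define t where "t = (q - p0) mod gap"
    have q: "q = p0 + k * gap + t" "q + gap = p0 + Suc k * gap + t"
      using \<open>q \<ge> p0\<close> by (simp_all add: k_def t_def)
    have "t < gap" using gap by (simp add: t_def)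
    then show "w (q + gap) = w q"
      using block_letters[of t k] block_letters[of t "Suc k"] q by (simp add: algebra_simps)
  qed
  then show False using not_eventually_periodic[of gap p0] gap by simp
qed

lemma preceded_by_b:
  assumes no_bv'a: "\<not> is_factor w (b # v' @ [a])"
    and P: "gap < P" "factor_at w P (Suc n) = v @ [a]" "w (P - 1) = b"
  shows "P \<le> q \<Longrightarrow> factor_at w q (Suc n) = v @ [a] \<Longrightarrow> w (q - 1) = b"
proof (induction q rule: less_induct)
  case (less q)
  show ?case
  proof (rule ccontr)
    assume "w (q - 1) \<noteq> b"
    then have "w (q - 1) = a" using letter[of "q - 1"] letters_ab by auto
    with less.prems P letters_ab have "q \<noteq> P" by auto
    have "factor_at w q n = v"
      using take_factor_at[of n "Suc n" w q] less.prems by (simp add: n_def)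
    moreover have "Suc (q - 1) = q" using less.prems P by simp
    ultimately have "factor_at w (q - 1) (Suc n) = a # v"
      using \<open>w (q - 1) = a\<close> factor_at_Suc_Cons[of w "q - 1" n] by simp
    then have v'_at: "factor_at w (q - gap) m = v'"
      using occurrence_extends_left[of "q - 1"] less.prems P gap by (simp add: diff_diff_left)
    show False
    proof (cases "P \<le> q - gap")
      case True
      have "factor_at w (q - gap) (Suc n) = v @ [a]"
        using factor_at_inner[of w "q - gap" v' 0 "Suc n"] v'_at take_Suc_v' gap by (simp add: m_def)
      then have "w (q - gap - 1) = b" using less.IH[of "q - gap"] less.prems True P gap by auto
      moreover have "w (q - gap + m) = a"
        using less.prems gap True P by (simp add: factor_at_Suc)
      moreover have "Suc (q - gap - 1) = q - gap" using True P by simp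
      ultimately have "factor_at w (q - gap - 1) (Suc (Suc m)) = b # v' @ [a]"
        using v'_at factor_at_Suc_Suc[of w "q - gap - 1" m] by simp
      then show False using no_bv'a by (metis is_factor_factor_at)
    next
      case False
      define i where "i = P - (q - gap)"
      have i: "1 \<le> i" "i < gap" using False \<open>q \<noteq> P\<close> less.prems by (auto simp: i_def)
      have "factor_at w (q - gap + i) (Suc n) = take (Suc n) (drop i v')"
        using factor_at_inner[of w "q - gap" v' i "Suc n"] v'_at i gap by (simp add: m_def)
      moreover have "q - gap + i = P" using False by (simp add: i_def)
      ultimately show False using no_inner_occurrence[OF i] P by simp
    qed
  qed
qed

lemma factor_bv'a: "is_factor w (b # v' @ [a])"
proof (rule ccontr)
  assume no_bv'a: "\<not> is_factor w (b # v' @ [a])"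
  obtain p0 where p0: "p0 \<ge> gap" "factor_at w p0 (length (b # v @ [a])) = b # v @ [a]"
    using factor_occurs_beyond[OF factor_bva] by blast
  then have P: "gap < Suc p0" "factor_at w (Suc p0) (Suc n) = v @ [a]" "w (Suc p0 - 1) = b"
    by (simp_all add: factor_at_Suc_Cons n_def)
  obtain p1 where p1: "p1 \<ge> Suc p0" "factor_at w p1 (length (a # v @ [a])) = a # v @ [a]"
    using factor_occurs_beyond[OF factor_ava] by blast
  then have "factor_at w (Suc p1) (Suc n) = v @ [a]" "w p1 = a"
    by (simp_all add: factor_at_Suc_Cons n_def)
  then have "a = b" using preceded_by_b[OF no_bv'a P, of "Suc p1"] p1 by simp
  then show False using letters_ab by auto
qed

lemma mixed_extensions_v': "mixed_extensions w v'"
  using factor_av'b factor_bv'a letters_ab by (auto simp: mixed_extensions_def)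

end

context sturmian_word
begin

lemma bispecial_mixed_extensions: "bispecial w v \<Longrightarrow> mixed_extensions w v"
proof (induction "length v" arbitrary: v rule: less_induct)
  case less
  show ?case
  proof (cases "v = []")
    case True
    then show ?thesis using mixed_extensions_Nil by simp
  next
    case False
    define K where "K = {k. k < length v \<and> bispecial w (take k v)}"
    define k where "k = Max K"
    have "finite K" "0 \<in> K" using False bispecial_Nil by (auto simp: K_def)
    then have "k \<in> K" unfolding k_def using Max_in by blast
    then have k: "k < length v" "bispecial w (take k v)" by (auto simp: K_def)
    have maximal: "\<not> bispecial w (take j v)" if "k < j" "j < length v" for j
    proof
      assume "bispecial w (take j v)"
      then have "j \<in> K" using that by (simp add: K_def)
      then show False using Max_ge[OF \<open>finite K\<close>, of j] that by (simp add: k_def)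
    qed
    have "consecutive_bispecials w (take k v) v"
      using k maximal less.hyps[of "take k v"] less.prems
      by unfold_locales (auto simp: min_absorb2)
    then show ?thesis by (rule consecutive_bispecials.mixed_extensions_v')
  qed
qed

lemma not_constant_extensions: "\<not> (is_factor w (1 # z @ [1]) \<and> is_factor w (0 # z @ [0]))"
proof
  assume z: "is_factor w (1 # z @ [1]) \<and> is_factor w (0 # z @ [0])"
  then have "bispecial w z"
    unfolding bispecial_def left_special_def right_special_def
    using is_factor_snocD[of w "1 # z" 1] is_factor_snocD[of w "0 # z" 0]
      is_factor_ConsD[of w 1 "z @ [1]"] is_factor_ConsD[of w 0 "z @ [0]"] by simp
  then have "mixed_extensions w z" by (rule bispecial_mixed_extensions)
  then show False using z not_all_two_sided_extensions[of z] by (auto simp: mixed_extensions_def)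
qed

lemma unbalanced_pair_ends:
  assumes fu: "is_factor w u" and fv: "is_factor w v" and len: "length u = length v"
    and unbalanced: "sum_list v + 2 \<le> sum_list u"
    and minimal: "\<And>u' v'. length u' < length u \<Longrightarrow> is_factor w u' \<Longrightarrow> is_factor w v' \<Longrightarrow>
      length u' = length v' \<Longrightarrow> sum_list u' \<le> sum_list v' + 1"
  shows "\<exists>s t. u = 1 # s @ [1] \<and> v = 0 # t @ [0]"
proof -
  have "u \<noteq> []" using unbalanced by auto
  then obtain x u1 x' u2 where u: "u = x # u1" "u = u2 @ [x']"
    by (metis neq_Nil_conv rev_exhaust)
  obtain y v1 y' v2 where v: "v = y # v1" "v = v2 @ [y']"
    using \<open>u \<noteq> []\<close> len by (metis length_0_conv neq_Nil_conv rev_exhaust)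
  have "x \<le> 1" using factor_letter[OF fu, of 0] u(1) by auto
  moreover have "y \<le> 1" using factor_letter[OF fv, of 0] v(1) by auto
  moreover have "x' \<le> 1" using factor_letter[OF fu, of "length u2"] u(2) by auto
  moreover have "y' \<le> 1" using factor_letter[OF fv, of "length v2"] v(2) by auto
  ultimately have letters: "x \<le> 1" "y \<le> 1" "x' \<le> 1" "y' \<le> 1" by auto
  have "x = 1 \<and> y = 0"
  proof (rule ccontr)
    assume "\<not> (x = 1 \<and> y = 0)"
    then have "sum_list v1 + 2 \<le> sum_list u1"
      using unbalanced[unfolded u(1) v(1)] letters by auto
    moreover have "sum_list u1 \<le> sum_list v1 + 1"
      using minimal[of u1 v1] fu fv len u v by (auto dest: is_factor_ConsD)
    ultimately show False by simp
  qed
  moreover have "x' = 1 \<and> y' = 0"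
  proof (rule ccontr)
    assume "\<not> (x' = 1 \<and> y' = 0)"
    then have "sum_list v2 + 2 \<le> sum_list u2"
      using unbalanced[unfolded u(2) v(2)] letters by auto
    moreover have "sum_list u2 \<le> sum_list v2 + 1"
      using minimal[of u2 v2] fu fv len u(2) v(2) by (auto dest: is_factor_snocD)
    ultimately show False by simp
  qed
  moreover have "u1 \<noteq> []" using unbalanced u \<open>x = 1 \<and> y = 0\<close> by auto
  moreover have "v1 \<noteq> []" using len u v \<open>u1 \<noteq> []\<close> by auto
  ultimately have "u = 1 # butlast u1 @ [1]" "v = 0 # butlast v1 @ [0]"
    using u v by (metis append_butlast_last_id last_ConsR last_snoc)+
  then show ?thesis by blast
qed

theorem balanced:
  assumes "is_factor w u" "is_factor w v" "length u = length v"
  shows "sum_list u \<le> sum_list v + 1"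
  using assms
proof (induction "length u" arbitrary: u v rule: less_induct)
  case less
  show ?case
  proof (rule ccontr)
    assume unbalanced: "\<not> ?case"
    then obtain s t where st: "u = 1 # s @ [1]" "v = 0 # t @ [0]"
      using unbalanced_pair_ends[OF less.prems] less.hyps by force
    obtain p s' t' where p: "s = p @ s'" "t = p @ t'" "s' = [] \<or> t' = [] \<or> hd s' \<noteq> hd t'"
      using longest_common_prefix by blast
    have "length s' = length t'" using st p less.prems(3) by simp
    moreover have "s' \<noteq> []"
      using not_constant_extensions[of s] st p less.prems \<open>length s' = length t'\<close> by auto
    ultimately obtain c s'' d t'' where cd: "s' = c # s''" "t' = d # t''" "c \<noteq> d"
      using p(3) by (metis length_0_conv list.collapse)
    have "c \<le> 1" "d \<le> 1"
      using factor_letter[OF less.prems(1), of "Suc (length p)"]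
        factor_letter[OF less.prems(2), of "Suc (length p)"] st p cd less.prems(3)
      by (auto simp: nth_append)
    then consider "c = 1" "d = 0" | "c = 0" "d = 1" using cd by linarith
    then show False
    proof cases
      case 1
      then have "is_factor w (1 # p @ [1])" "is_factor w (0 # p @ [0])"
        using is_factor_take[OF less.prems(1), of "length p + 2"]
          is_factor_take[OF less.prems(2), of "length p + 2"] st p cd by auto
      then show False using not_constant_extensions by blast
    next
      case 2
      have "is_factor w (s'' @ [1])" "is_factor w (t'' @ [0])"
        using is_factor_drop[OF less.prems(1), of "length p + 2"]
          is_factor_drop[OF less.prems(2), of "length p + 2"] st p cd by auto
      moreover have "length (s'' @ [1]) < length u" "length (s'' @ [1]) = length (t'' @ [0])"
        using st p cd less.prems(3) by auto
      ultimately have "sum_list (s'' @ [1]) \<le> sum_list (t'' @ [0]) + 1"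
        using less.hyps by blast
      then show False using unbalanced st p cd 2 by simp
    qed
  qed
qed

end
section \<open>Slope and deviation of a Sturmian word\<close>

definition ones :: "(nat \<Rightarrow> nat) \<Rightarrow> nat \<Rightarrow> nat \<Rightarrow> nat" where
  "ones w k n = (\<Sum>i<k. w (n+i))"

definition min_ones :: "(nat \<Rightarrow> nat) \<Rightarrow> nat \<Rightarrow> nat" where
  "min_ones w k = Min (range (ones w k))"

text \<open>For a balanced word the frequency of ones exists and equals this supremum, since
  \<open>min_ones\<close> is superadditive and \<open>min_ones w k \<le> ones w k n \<le> min_ones w k + 1\<close>.\<close>

definition slope :: "(nat \<Rightarrow> nat) \<Rightarrow> real" where
  "slope w = Sup ((\<lambda>k. real (min_ones w k) / real k) ` {1..})"

lemma ones_0 [simp]: "ones w 0 n = 0"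
  by (simp add: ones_def)

lemma ones_Suc: "ones w (Suc k) n = ones w k n + w (n + k)"
  by (simp add: ones_def)

lemma ones_add: "ones w (k + l) n = ones w k n + ones w l (n + k)"
  by (induction l) (simp_all add: ones_Suc algebra_simps)

lemma ones_Suc_Cons: "ones w (Suc k) n = w n + ones w k (Suc n)"
  using ones_add[of w 1 k n] by (simp add: ones_def)

lemma sum_list_factor_at: "sum_list (factor_at w n k) = ones w k n"
  by (induction k) (simp_all add: factor_at_Suc ones_Suc)

lemma ones_mult_lower: "(\<forall>n. ones w Q n \<ge> P) \<Longrightarrow> ones w (j * Q) m \<ge> j * P"
proof (induction j arbitrary: m)
  case (Suc j)
  have "ones w (Suc j * Q) m = ones w Q m + ones w (j * Q) (m + Q)"
    using ones_add[of w Q "j * Q" m] by (simp add: add.commute)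
  moreover have "P \<le> ones w Q m" "j * P \<le> ones w (j * Q) (m + Q)"
    using Suc by blast+
  ultimately show ?case by simp
qed simp

lemma ones_mult_upper: "(\<forall>n. ones w Q n \<le> P) \<Longrightarrow> ones w (j * Q) m \<le> j * P"
proof (induction j arbitrary: m)
  case (Suc j)
  have "ones w (Suc j * Q) m = ones w Q m + ones w (j * Q) (m + Q)"
    using ones_add[of w Q "j * Q" m] by (simp add: add.commute)
  moreover have "ones w Q m \<le> P" "ones w (j * Q) (m + Q) \<le> j * P"
    using Suc by blast+
  ultimately show ?case by simp
qed simp

lemma ones_three_blocks:
  assumes "t \<ge> 1"
  shows "ones w (Suc t * Q) n = ones w Q n + ones w ((t - 1) * Q) (n + Q) + ones w Q (n + t * Q)"
proof -
  have "Suc t * Q = Q + ((t - 1) * Q + Q)" using assms by (simp add: algebra_simps)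
  then have "ones w (Suc t * Q) n
      = ones w Q n + (ones w ((t - 1) * Q) (n + Q) + ones w Q (n + Q + (t - 1) * Q))"
    by (simp only: ones_add)
  moreover have "n + Q + (t - 1) * Q = n + t * Q" using assms by (cases t) (simp_all add: algebra_simps)
  ultimately show ?thesis by (simp only: add.assoc)
qed

lemma ones_two_heavy_blocks:
  assumes "\<forall>n. ones w Q n \<ge> P" "ones w Q n \<ge> P + 1" "ones w Q (n + t * Q) \<ge> P + 1" "t \<ge> 1"
  shows "ones w (Suc t * Q) n \<ge> Suc t * P + 2"
proof -
  have "ones w ((t - 1) * Q) (n + Q) \<ge> (t - 1) * P" by (rule ones_mult_lower[OF assms(1)])
  then have "ones w (Suc t * Q) n \<ge> (P + 1) + (t - 1) * P + (P + 1)"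
    using ones_three_blocks[OF assms(4), of w Q n] assms(2,3) by linarith
  moreover have "(P + 1) + (t - 1) * P + (P + 1) = Suc t * P + 2"
    using assms(4) by (cases t) (auto simp: algebra_simps)
  ultimately show ?thesis by linarith
qed

lemma ones_two_light_blocks:
  assumes "\<forall>n. ones w Q n \<le> P + 1" "ones w Q n \<le> P" "ones w Q (n + t * Q) \<le> P" "t \<ge> 1"
  shows "ones w (Suc t * Q) n + 2 \<le> Suc t * (P + 1)"
proof -
  have "ones w ((t - 1) * Q) (n + Q) \<le> (t - 1) * (P + 1)" by (rule ones_mult_upper[OF assms(1)])
  then have "ones w (Suc t * Q) n \<le> P + (t - 1) * (P + 1) + P"
    using ones_three_blocks[OF assms(4), of w Q n] assms(2,3) by linarith
  moreover have "P + (t - 1) * (P + 1) + P + 2 = Suc t * (P + 1)"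
    using assms(4) by (cases t) (auto simp: algebra_simps)
  ultimately show ?thesis by linarith
qed

lemma mod_eq_imp_add_multiple:
  fixes n n' Q :: nat
  assumes "n mod Q = n' mod Q" "n < n'"
  obtains t where "t \<ge> 1" "n' = n + t * Q"
proof -
  have "Q dvd n' - n" using assms mod_eq_dvd_iff_nat[of n n' Q] by simp
  then obtain t where "n' - n = Q * t" by (elim dvdE)
  then have "n' = n + t * Q" using assms(2) by (simp add: mult.commute)
  moreover have "t \<ge> 1" using calculation assms(2) by (cases t) auto
  ultimately show thesis using that by blast
qed

context sturmian_word
begin

lemma ones_balanced: "ones w k n \<le> ones w k m + 1"
  using balanced[of "factor_at w n k" "factor_at w m k"] by (simp add: sum_list_factor_at)

lemma ones_le: "ones w k n \<le> k"
proof -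
  have "ones w k n \<le> (\<Sum>i<k. 1)"
    unfolding ones_def by (rule sum_mono) (use letter in \<open>metis le_refl zero_le_one\<close>)
  then show ?thesis by simp
qed

lemma finite_range_ones: "finite (range (ones w k))"
  by (rule finite_subset[of _ "{..k}"]) (auto simp: ones_le)

lemma min_ones_le_ones: "min_ones w k \<le> ones w k n"
  unfolding min_ones_def using finite_range_ones by (intro Min_le) auto

lemma min_ones_attained: "\<exists>n. ones w k n = min_ones w k"
proof -
  have "min_ones w k \<in> range (ones w k)"
    unfolding min_ones_def using finite_range_ones by (intro Min_in) auto
  then show ?thesis by auto
qed

lemma ones_le_min_ones: "ones w k n \<le> min_ones w k + 1"
  using min_ones_attained[of k] ones_balanced[of k n] by metis

lemma min_ones_superadditive: "min_ones w k + min_ones w l \<le> min_ones w (k + l)"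
proof -
  obtain n where "ones w (k+l) n = min_ones w (k+l)" using min_ones_attained by blast
  moreover have "ones w (k+l) n = ones w k n + ones w l (n+k)" by (rule ones_add)
  ultimately show ?thesis using min_ones_le_ones[of k n] min_ones_le_ones[of l "n+k"] by linarith
qed

lemma min_ones_subadditive: "min_ones w (k + l) \<le> min_ones w k + min_ones w l + 1"
proof -
  obtain n where n: "ones w k n = min_ones w k" using min_ones_attained by blast
  have "min_ones w (k+l) \<le> ones w (k+l) n" by (rule min_ones_le_ones)
  also have "\<dots> = ones w k n + ones w l (n+k)" by (rule ones_add)
  finally show ?thesis using n ones_le_min_ones[of l "n+k"] by linarith
qed

lemma min_ones_mult_lower: "j * min_ones w m \<le> min_ones w (j * m)"
proof (induction j)
  case (Suc j)
  have "min_ones w (j * m) + min_ones w m \<le> min_ones w (j * m + m)"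
    by (rule min_ones_superadditive)
  then show ?case using Suc by (simp add: add.commute)
qed simp

lemma min_ones_mult_upper: "min_ones w (j * k) + 1 \<le> j * (min_ones w k + 1)" if "j \<ge> 1"
  using that
proof (induction j)
  case (Suc j)
  show ?case
  proof (cases "j = 0")
    case True then show ?thesis by simp
  next
    case False
    then have IH: "min_ones w (j * k) + 1 \<le> j * (min_ones w k + 1)" using Suc by simp
    have "min_ones w (j * k + k) \<le> min_ones w (j * k) + min_ones w k + 1"
      by (rule min_ones_subadditive)
    then show ?thesis using IH by (simp add: add.commute)
  qed
qed simp

lemma min_ones_ratio: "k \<ge> 1 \<Longrightarrow> m \<ge> 1 \<Longrightarrow> k * min_ones w m < m * (min_ones w k + 1)"
  using min_ones_mult_lower[of k m] min_ones_mult_upper[of m k] by (simp add: mult.commute)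

lemma min_ones_le: "min_ones w k \<le> k"
  using min_ones_le_ones[of k 0] ones_le[of k 0] by simp


lemma bdd_above_min_ones_ratios: "bdd_above ((\<lambda>k. real (min_ones w k) / real k) ` {1..})"
proof (rule bdd_aboveI[of _ 1])
  fix x assume "x \<in> (\<lambda>k. real (min_ones w k) / real k) ` {1..}"
  then obtain k where "k \<ge> 1" "x = real (min_ones w k) / real k" by auto
  then show "x \<le> 1" using min_ones_le[of k] by (simp add: divide_le_eq)
qed

lemma min_ones_le_slope: "k \<ge> 1 \<Longrightarrow> real (min_ones w k) \<le> real k * slope w"
proof -
  assume k: "k \<ge> 1"
  have "real (min_ones w k) / real k \<le> slope w"
    unfolding slope_def using k bdd_above_min_ones_ratios by (intro cSup_upper) auto
  then show ?thesis using k by (simp add: divide_le_eq mult.commute)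
qed

lemma slope_le_min_ones: "k \<ge> 1 \<Longrightarrow> real k * slope w \<le> real (min_ones w k) + 1"
proof -
  assume k: "k \<ge> 1"
  have "slope w \<le> (real (min_ones w k) + 1) / real k" unfolding slope_def
  proof (rule cSup_least)
    show "(\<lambda>k. real (min_ones w k) / real k) ` {1..} \<noteq> {}" by simp
    fix x assume "x \<in> (\<lambda>k. real (min_ones w k) / real k) ` {1..}"
    then obtain m where m: "m \<ge> 1" "x = real (min_ones w m) / real m" by auto
    have "real (k * min_ones w m) \<le> real (m * (min_ones w k + 1))"
      using min_ones_ratio[OF k m(1)] by linarith
    then have "real k * real (min_ones w m) \<le> real m * (real (min_ones w k) + 1)"
      by (simp add: algebra_simps)
    moreover have mk: "real m > 0" "real k > 0" using m k by auto
    moreover have xm: "x * real m = real (min_ones w m)" using m mk by simp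
    ultimately have "(x * real k) * real m \<le> (real (min_ones w k) + 1) * real m"
      by (metis mult.commute mult.left_commute)
    then have "x * real k \<le> real (min_ones w k) + 1" using mk by simp
    then show "x \<le> (real (min_ones w k) + 1) / real k" using mk by (simp add: le_divide_eq)
  qed
  then show ?thesis using k by (simp add: le_divide_eq mult.commute)
qed

lemma ones_slope_bound: "\<bar>real (ones w k n) - real k * slope w\<bar> \<le> 1"
proof (cases "k = 0")
  case True then show ?thesis by simp
next
  case False
  then have k: "k \<ge> 1" by simp
  have "real (min_ones w k) \<le> real (ones w k n)" using min_ones_le_ones by simp
  moreover have "real (ones w k n) \<le> real (min_ones w k) + 1"
    using ones_le_min_ones[of k n] by linarith
  ultimately show ?thesis using min_ones_le_slope[OF k] slope_le_min_ones[OF k] by linarith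
qed

text \<open>If \<open>Q \<cdot> slope = p\<close>, balance pins every block of length \<open>Q\<close> to \<open>p\<close> ones,
  except that two blocks at distance a multiple of \<open>Q\<close> cannot both deviate: together with
  the blocks in between they would form a block of length \<open>(t + 1) Q\<close> whose number of ones
  is off from \<open>(t + 1) p\<close> by \<open>2\<close>.\<close>

lemma rational_slope_exceptional_blocks:
  assumes Q: "Q \<ge> 1" "real Q * slope w = real p" and t: "t \<ge> 1"
    and deviant: "ones w Q n \<noteq> p" "ones w Q (n + t * Q) \<noteq> p"
  shows False
proof -
  have "real (Suc t * Q) * slope w = real (Suc t) * real p"
    using Q(2) by (simp only: of_nat_mult mult.assoc)
  then have bound: "\<bar>real (ones w (Suc t * Q) n) - real (Suc t) * real p\<bar> \<le> 1"
    using ones_slope_bound[of "Suc t * Q" n] by simp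
  have "real (min_ones w Q) \<le> real p" "real p \<le> real (min_ones w Q) + 1"
    using min_ones_le_slope[OF Q(1)] slope_le_min_ones[OF Q(1)] Q(2) by simp_all
  then consider "p = min_ones w Q" | "p = min_ones w Q + 1" by linarith
  then show False
  proof cases
    case 1
    then have "\<forall>n. ones w Q n \<ge> p" using min_ones_le_ones by simp
    then have "ones w (Suc t * Q) n \<ge> Suc t * p + 2"
      using ones_two_heavy_blocks[OF _ _ _ t] deviant by (metis Suc_eq_plus1 le_antisym not_less_eq_eq)
    then have "real (ones w (Suc t * Q) n) \<ge> real (Suc t) * real p + 2"
      by (metis of_nat_add of_nat_le_iff of_nat_mult of_nat_numeral)
    then show False using bound by linarith
  next
    case 2
    then have "\<forall>n. ones w Q n \<le> min_ones w Q + 1" using ones_le_min_ones by simp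
    then have "ones w (Suc t * Q) n + 2 \<le> Suc t * p"
      using ones_two_light_blocks[OF _ _ _ t] deviant 2 by (metis le_Suc_eq Suc_eq_plus1)
    then have "real (ones w (Suc t * Q) n) + 2 \<le> real (Suc t) * real p"
      by (metis of_nat_add of_nat_le_iff of_nat_mult of_nat_numeral)
    then show False using bound by linarith
  qed
qed

theorem slope_irrational: "slope w \<notin> \<rat>"
proof
  assume "slope w \<in> \<rat>"
  then obtain p q where "q > 0" and pq: "slope w = of_int p / of_int q"
    by (auto elim!: Rats_cases')
  define Q where "Q = nat q"
  have Q: "Q \<ge> 1" "real Q * slope w = of_int p" using \<open>q > 0\<close> pq by (auto simp: Q_def)
  then have "of_int p \<ge> (0::real)" using min_ones_le_slope[OF Q(1)] by linarith
  then have Qp: "real Q * slope w = real (nat p)" using Q by simp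
  define E where "E = {n. ones w Q n \<noteq> nat p}"
  have "inj_on (\<lambda>n. n mod Q) E"
  proof (rule inj_onI, rule ccontr)
    fix n n' assume "n \<in> E" "n' \<in> E" "n mod Q = n' mod Q" "n \<noteq> n'"
    then consider "n < n'" | "n' < n" by linarith
    then show False
    proof cases
      case 1
      with \<open>n mod Q = n' mod Q\<close> obtain t where "t \<ge> 1" "n' = n + t * Q"
        by (rule mod_eq_imp_add_multiple)
      then show False
        using rational_slope_exceptional_blocks[OF Q(1) Qp] \<open>n \<in> E\<close> \<open>n' \<in> E\<close> by (auto simp: E_def)
    next
      case 2
      with \<open>n mod Q = n' mod Q\<close> obtain t where "t \<ge> 1" "n = n' + t * Q"
        by (metis mod_eq_imp_add_multiple)
      then show False
        using rational_slope_exceptional_blocks[OF Q(1) Qp] \<open>n \<in> E\<close> \<open>n' \<in> E\<close> by (auto simp: E_def)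
    qed
  qed
  then have "finite E" by (rule inj_on_finite[of _ _ "{..<Q}"]) (use Q in auto)
  then obtain M where M: "\<forall>n\<in>E. n < M" using finite_nat_set_iff_bounded by blast
  have "w (n + Q) = w n" if "n \<ge> M" for n
  proof -
    have "n \<notin> E" "Suc n \<notin> E" using M that by auto
    then have "ones w Q n = ones w Q (Suc n)" by (simp add: E_def)
    then show ?thesis using ones_Suc[of w Q n] ones_Suc_Cons[of w Q n] by simp
  qed
  then show False using not_eventually_periodic[of Q M] Q by simp
qed

lemma slope_bounds: "0 < slope w" "slope w < 1"
proof -
  have "real (min_ones w 1) \<le> slope w" using min_ones_le_slope[of 1] by simp
  then have a0: "0 \<le> slope w" by linarith
  obtain n where "factor_at w n 1 = [0]" using letter_factor[of 0] by (auto simp: is_factor_def)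
  then have "w n = 0" by (simp add: factor_at_def)
  then have "min_ones w 1 = 0" using min_ones_le_ones[of 1 n] by (simp add: ones_def)
  then have a1: "slope w \<le> 1" using slope_le_min_ones[of 1] by simp
  have "slope w \<noteq> 0" "slope w \<noteq> 1" using slope_irrational by auto
  then show "0 < slope w" "slope w < 1" using a0 a1 by auto
qed

lemma slope_multiple_not_int: "n \<noteq> m \<Longrightarrow> (real n - real m) * slope w \<noteq> of_int z"
proof
  assume nm: "n \<noteq> m" and eq: "(real n - real m) * slope w = of_int z"
  have "real n - real m \<noteq> 0" using nm by simp
  then have "slope w = of_int z / (real n - real m)" using eq by (simp add: field_simps)
  also have "\<dots> \<in> \<rat>" by (intro Rats_divide) (auto intro: Rats_diff)
  finally show False using slope_irrational by simp
qed

end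

definition deviation :: "(nat \<Rightarrow> nat) \<Rightarrow> nat \<Rightarrow> real" where
  "deviation w n = real (ones w n 0) - real n * slope w"

definition deviation_inf :: "(nat \<Rightarrow> nat) \<Rightarrow> real" where
  "deviation_inf w = Inf (range (deviation w))"

context sturmian_word
begin

lemma deviation_0: "deviation w 0 = 0"
  by (simp add: deviation_def)

lemma deviation_diff:
  "m \<le> n \<Longrightarrow> deviation w n - deviation w m = real (ones w (n - m) m) - real (n - m) * slope w"
  using ones_add[of w m "n - m" 0] by (simp add: deviation_def of_nat_diff algebra_simps)

lemma deviation_diff_le_1: "\<bar>deviation w n - deviation w m\<bar> \<le> 1"
proof (cases "m \<le> n")
  case True
  then show ?thesis using deviation_diff[OF True] ones_slope_bound[of "n - m" m] by simp
next
  case False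
  then show ?thesis
    using deviation_diff[of n m] ones_slope_bound[of "m - n" n] by (simp add: abs_minus_commute)
qed

lemma letter_deviation: "real (w n) = deviation w (Suc n) - deviation w n + slope w"
  by (simp add: deviation_def ones_Suc algebra_simps)

lemma deviation_diff_int:
  "deviation w n - deviation w m = of_int (int (ones w n 0) - int (ones w m 0)) - (real n - real m) * slope w"
  by (simp add: deviation_def algebra_simps)

lemma deviation_diff_less_1: "n \<noteq> m \<Longrightarrow> \<bar>deviation w n - deviation w m\<bar> < 1"
proof -
  assume nm: "n \<noteq> m"
  have "\<bar>deviation w n - deviation w m\<bar> \<le> 1" by (rule deviation_diff_le_1)
  moreover have "\<bar>deviation w n - deviation w m\<bar> \<noteq> 1"
  proof
    assume "\<bar>deviation w n - deviation w m\<bar> = 1"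
    then have "deviation w n - deviation w m = 1 \<or> deviation w n - deviation w m = -1" by linarith
    then obtain c :: int where "deviation w n - deviation w m = of_int c"
      by (metis of_int_1 of_int_minus)
    then have "(real n - real m) * slope w = of_int (int (ones w n 0) - int (ones w m 0) - c)"
      using deviation_diff_int[of n m] by simp
    then show False using slope_multiple_not_int[OF nm] by blast
  qed
  ultimately show ?thesis by simp
qed

lemma deviation_inj: "n \<noteq> m \<Longrightarrow> deviation w n \<noteq> deviation w m"
proof
  assume nm: "n \<noteq> m" and "deviation w n = deviation w m"
  then have "(real n - real m) * slope w = of_int (int (ones w n 0) - int (ones w m 0))"
    using deviation_diff_int[of n m] by simp
  then show False using slope_multiple_not_int[OF nm] by blast
qed

lemma deviation_range: "deviation_inf w \<le> deviation w n" "deviation w n \<le> deviation_inf w + 1"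
proof -
  have "- 1 \<le> deviation w m" for m
    using deviation_diff_le_1[of m 0] deviation_0 by simp
  then have "bdd_below (range (deviation w))" by (intro bdd_belowI[of _ "-1"]) auto
  then show "deviation_inf w \<le> deviation w n"
    unfolding deviation_inf_def by (intro cInf_lower) auto
  have "deviation w n - 1 \<le> deviation w m" for m
    using deviation_diff_le_1[of n m] by simp
  then have "deviation w n - 1 \<le> deviation_inf w"
    unfolding deviation_inf_def by (intro cInf_greatest) auto
  then show "deviation w n \<le> deviation_inf w + 1" by simp
qed

lemma deviation_not_both_extremes:
  "deviation w j = deviation_inf w \<Longrightarrow> deviation w j' = deviation_inf w + 1 \<Longrightarrow> False"
  using deviation_diff_less_1[of j' j] by (cases "j = j'") auto

end

lemma exists_small_positive_residue:
  fixes \<alpha> \<eta> :: real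
  assumes "\<alpha> \<notin> \<rat>" "\<eta> > 0"
  obtains N K where "N \<ge> 1" "0 < real N * \<alpha> - of_int K" "real N * \<alpha> - of_int K < \<eta>"
proof -
  define t where "t = min (\<eta> / 2) (1 / 2)"
  have t: "t > 0" "t \<le> 1" "2 * t \<le> \<eta>" using assms by (auto simp: t_def)
  obtain k where k: "k > 0" "\<bar>frac (real k * \<alpha>) - t\<bar> < t"
    using Kronecker_approx_1_explicit[OF assms(1), of t t] t by auto
  show thesis
    by (rule that[of k "\<lfloor>real k * \<alpha>\<rfloor>"]) (use k t in \<open>auto simp: frac_def\<close>)
qed

lemma exists_small_negative_residue:
  fixes \<alpha> \<eta> :: real
  assumes "\<alpha> \<notin> \<rat>" "\<eta> > 0"
  obtains N K where "N \<ge> 1" "- \<eta> < real N * \<alpha> - of_int K" "real N * \<alpha> - of_int K < 0"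
proof -
  define t where "t = min (\<eta> / 2) (1 / 2)"
  have t: "t > 0" "t \<le> 1 / 2" "2 * t \<le> \<eta>" using assms by (auto simp: t_def)
  obtain k where k: "k > 0" "\<bar>frac (real k * \<alpha>) - (1 - t)\<bar> < t"
    using Kronecker_approx_1_explicit[OF assms(1), of "1 - t" t] t by auto
  show thesis
    by (rule that[of k "\<lfloor>real k * \<alpha>\<rfloor> + 1"])
      (use k t frac_lt_1[of "real k * \<alpha>"] in \<open>auto simp: frac_def\<close>)
qed

lemma eq_if_diff_int_abs_less_1:
  fixes x y :: real
  assumes "\<bar>x - y\<bar> < 1" "x - y = of_int z"
  shows "x = y"
proof -
  have "\<bar>of_int z :: real\<bar> < 1" using assms by simp
  then have "z = 0" by linarith
  then show ?thesis using assms by simp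
qed

context sturmian_word
begin

text \<open>Since \<open>deviation w\<close> takes values in an interval of length \<open>1\<close> and changes by an integer
  when a translation by \<open>N\<close> is compared with the rotation by \<open>N \<cdot> slope w\<close>, the two agree
  wherever the rotated value stays inside the interval.\<close>

lemma deviation_translate_int:
  "\<exists>z. deviation w (m + N) - (deviation w m - (real N * slope w - of_int K)) = of_int z"
proof -
  have "deviation w (m + N) - (deviation w m - (real N * slope w - of_int K))
      = of_int (int (ones w (m + N) 0) - int (ones w m 0) - K)"
    by (simp add: deviation_def algebra_simps)
  then show ?thesis by blast
qed

lemma deviation_translate:
  assumes "deviation_inf w < deviation w m - \<delta>" "deviation w m - \<delta> < deviation_inf w + 1"
    and \<delta>: "\<delta> = real N * slope w - of_int K"
  shows "deviation w (m + N) = deviation w m - \<delta>"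
proof -
  obtain z where "deviation w (m + N) - (deviation w m - \<delta>) = of_int z"
    using deviation_translate_int[of m N K] \<delta> by blast
  moreover have "\<bar>deviation w (m + N) - (deviation w m - \<delta>)\<bar> < 1"
    using assms(1,2) deviation_range[of "m + N"] by linarith
  ultimately show ?thesis by (rule eq_if_diff_int_abs_less_1[rotated])
qed

lemma factor_at_translate:
  assumes inside: "\<And>i. i \<le> L \<Longrightarrow>
      deviation_inf w < deviation w (m + i) - \<delta> \<and> deviation w (m + i) - \<delta> < deviation_inf w + 1"
    and \<delta>: "\<delta> = real N * slope w - of_int K"
  shows "factor_at w (m + N) L = factor_at w m L"
  unfolding factor_at_eq_iff
proof (intro allI impI)
  fix i assume "i < L"
  have "deviation w (m + i + N) = deviation w (m + i) - \<delta>"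
    "deviation w (Suc (m + i) + N) = deviation w (Suc (m + i)) - \<delta>"
    using deviation_translate[where m = "m + i", OF _ _ \<delta>]
      deviation_translate[where m = "Suc (m + i)", OF _ _ \<delta>] inside[of i] inside[of "Suc i"] \<open>i < L\<close>
    by auto
  then have "real (w (m + N + i)) = real (w (m + i))"
    using letter_deviation[of "m + N + i"] letter_deviation[of "m + i"] by (simp add: algebra_simps)
  then show "w (m + N + i) = w (m + i)" by simp
qed

end

context sturmian_word
begin

lemma letter_after_translate:
  assumes "deviation w (Suc j + N) = deviation w (Suc j) - \<delta>"
    and "deviation w (j + N) = deviation w j - \<delta> + e"
  shows "real (w (j + N)) = real (w j) - e"
  using assms letter_deviation[of "j + N"] letter_deviation[of j] by simp

lemma left_special_after_deviation_inf:
  assumes inf: "deviation w j = deviation_inf w"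
  shows "left_special w (factor_at w (Suc j) k)"
proof -
  have "real (w j) > 0"
    using letter_deviation[of j] deviation_range(1)[of "Suc j"] inf slope_bounds by linarith
  then have wj: "w j = 1" using letter[of j] by auto
  have above: "deviation w (j + i) > deviation_inf w" if "i \<ge> 1" for i
    using deviation_range(1)[of "j + i"] deviation_inj[of "j + i" j] inf that by force
  have below: "deviation w n < deviation_inf w + 1" for n
    using deviation_range(2)[of n] deviation_not_both_extremes[OF inf, of n] by force
  define \<eta> where "\<eta> = Min ((\<lambda>i. deviation w (j + i) - deviation_inf w) ` {1..Suc k})"
  have "\<eta> > 0" unfolding \<eta>_def using above by (subst Min_gr_iff) auto
  have \<eta>_le: "\<eta> \<le> deviation w (j + i) - deviation_inf w" if "i \<in> {1..Suc k}" for i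
    unfolding \<eta>_def using that by (intro Min_le) auto
  obtain N K where N: "N \<ge> 1" and \<delta>: "0 < real N * slope w - of_int K" "real N * slope w - of_int K < \<eta>"
    using exists_small_positive_residue[OF slope_irrational \<open>\<eta> > 0\<close>] by blast
  define \<delta> where "\<delta> = real N * slope w - of_int K"
  have inside: "deviation_inf w < deviation w (Suc j + i) - \<delta> \<and> deviation w (Suc j + i) - \<delta> < deviation_inf w + 1"
    if "i \<le> k" for i
    using \<eta>_le[of "Suc i"] below[of "Suc j + i"] \<delta> that by (simp add: \<delta>_def)
  have wrap: "deviation w (j + N) = deviation w j - \<delta> + 1"
  proof -
    obtain z where "deviation w (j + N) - (deviation w j - \<delta>) = of_int z"
      using deviation_translate_int[of j N K] by (auto simp: \<delta>_def)
    then have "deviation w (j + N) - (deviation w j - \<delta> + 1) = of_int (z - 1)" by simp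
    moreover have "\<bar>deviation w (j + N) - (deviation w j - \<delta> + 1)\<bar> < 1"
      using above[OF N] below[of "j + N"] inf \<delta> \<eta>_le[of 1] deviation_range(2)[of "Suc j"]
      by (simp add: \<delta>_def)
    ultimately show ?thesis by (rule eq_if_diff_int_abs_less_1[rotated])
  qed
  have "deviation w (Suc j + N) = deviation w (Suc j) - \<delta>"
    using deviation_translate[where m = "Suc j", OF _ _ \<delta>_def] inside[of 0] by simp
  then have "real (w (j + N)) = real (w j) - 1" using wrap by (rule letter_after_translate)
  then have "factor_at w (j + N) (Suc k) = 0 # factor_at w (Suc j) k"
    using wj factor_at_translate[OF inside \<delta>_def] by (simp add: factor_at_Suc_Cons)
  moreover have "factor_at w j (Suc k) = 1 # factor_at w (Suc j) k"
    using wj by (simp add: factor_at_Suc_Cons)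
  ultimately show ?thesis unfolding left_special_def by (metis is_factor_factor_at)
qed

lemma left_special_after_deviation_sup:
  assumes sup: "deviation w j = deviation_inf w + 1"
  shows "left_special w (factor_at w (Suc j) k)"
proof -
  have "real (w j) < 1"
    using letter_deviation[of j] deviation_range(2)[of "Suc j"] sup slope_bounds by linarith
  then have wj: "w j = 0" using letter[of j] by auto
  have below: "deviation w (j + i) < deviation_inf w + 1" if "i \<ge> 1" for i
    using deviation_range(2)[of "j + i"] deviation_inj[of "j + i" j] sup that by force
  have above: "deviation w n > deviation_inf w" for n
    using deviation_range(1)[of n] deviation_not_both_extremes[OF _ sup, of n] by force
  define \<eta> where "\<eta> = Min ((\<lambda>i. deviation_inf w + 1 - deviation w (j + i)) ` {1..Suc k})"
  have "\<eta> > 0" unfolding \<eta>_def using below by (subst Min_gr_iff) auto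
  have \<eta>_le: "\<eta> \<le> deviation_inf w + 1 - deviation w (j + i)" if "i \<in> {1..Suc k}" for i
    unfolding \<eta>_def using that by (intro Min_le) auto
  obtain N K where N: "N \<ge> 1" and \<delta>: "- \<eta> < real N * slope w - of_int K" "real N * slope w - of_int K < 0"
    using exists_small_negative_residue[OF slope_irrational \<open>\<eta> > 0\<close>] by blast
  define \<delta> where "\<delta> = real N * slope w - of_int K"
  have inside: "deviation_inf w < deviation w (Suc j + i) - \<delta> \<and> deviation w (Suc j + i) - \<delta> < deviation_inf w + 1"
    if "i \<le> k" for i
    using \<eta>_le[of "Suc i"] above[of "Suc j + i"] \<delta> that by (simp add: \<delta>_def)
  have wrap: "deviation w (j + N) = deviation w j - \<delta> + - 1"
  proof -
    obtain z where "deviation w (j + N) - (deviation w j - \<delta>) = of_int z"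
      using deviation_translate_int[of j N K] by (auto simp: \<delta>_def)
    then have "deviation w (j + N) - (deviation w j - \<delta> + - 1) = of_int (z + 1)" by simp
    moreover have "\<bar>deviation w (j + N) - (deviation w j - \<delta> + - 1)\<bar> < 1"
      using above[of "j + N"] below[OF N] sup \<delta> \<eta>_le[of 1] deviation_range(1)[of "Suc j"]
      by (simp add: \<delta>_def)
    ultimately show ?thesis by (rule eq_if_diff_int_abs_less_1[rotated])
  qed
  have "deviation w (Suc j + N) = deviation w (Suc j) - \<delta>"
    using deviation_translate[where m = "Suc j", OF _ _ \<delta>_def] inside[of 0] by simp
  then have "real (w (j + N)) = real (w j) - - 1" using wrap by (rule letter_after_translate)
  then have "factor_at w (j + N) (Suc k) = 1 # factor_at w (Suc j) k"
    using wj factor_at_translate[OF inside \<delta>_def] by (simp add: factor_at_Suc_Cons)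
  moreover have "factor_at w j (Suc k) = 0 # factor_at w (Suc j) k"
    using wj by (simp add: factor_at_Suc_Cons)
  ultimately show ?thesis unfolding left_special_def by (metis is_factor_factor_at)
qed

lemma characteristic_word_eq:
  assumes "x \<in> orbit_closure w" "\<And>k. left_special w (factor_at x 0 k)"
  shows "characteristic_word w = x"
  unfolding characteristic_word_def
proof (rule the_equality)
  fix y assume y: "y \<in> orbit_closure w \<and> (\<forall>k. left_special w (factor_at y 0 k))"
  show "y = x"
  proof
    fix i
    have "factor_at y 0 (Suc i) = factor_at x 0 (Suc i)"
      using left_special_unique y assms(2) by simp
    then show "y i = x i" using factor_at_nth[of i "Suc i"] by (metis add_0 lessI)
  qed
qed (use assms in simp)

lemma characteristic_word_at_deviation_extremum:
  assumes "deviation w j = deviation_inf w \<or> deviation w j = deviation_inf w + 1"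
  shows "characteristic_word w = shift (Suc j) w"
proof (rule characteristic_word_eq)
  show "shift (Suc j) w \<in> orbit_closure w" unfolding orbit_closure_def by auto
  show "left_special w (factor_at (shift (Suc j) w) 0 k)" for k
    using assms left_special_after_deviation_inf left_special_after_deviation_sup
    by (auto simp: factor_at_shift)
qed

lemma nonsingular_deviation_interior:
  assumes "nonsingular w"
  shows "deviation_inf w < deviation w n" "deviation w n < deviation_inf w + 1"
proof -
  have "deviation w n \<noteq> deviation_inf w" "deviation w n \<noteq> deviation_inf w + 1"
    using characteristic_word_at_deviation_extremum[of n] assms by (auto simp: nonsingular_def)
  then show "deviation_inf w < deviation w n" "deviation w n < deviation_inf w + 1"
    using deviation_range[of n] by auto
qed

theorem nonsingular_prefix_returns:
  assumes "nonsingular w"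
  obtains \<epsilon> where "\<epsilon> > 0"
    "\<And>n K. \<bar>real n * slope w - of_int K\<bar> < \<epsilon> \<Longrightarrow> factor_at w n L = factor_at w 0 L"
proof
  define \<epsilon> where "\<epsilon> = Min ((\<lambda>i. min (deviation w i - deviation_inf w) (deviation_inf w + 1 - deviation w i)) ` {..L})"
  show "\<epsilon> > 0" unfolding \<epsilon>_def using nonsingular_deviation_interior[OF assms] by (subst Min_gr_iff) auto
  fix n K assume small: "\<bar>real n * slope w - of_int K\<bar> < \<epsilon>"
  have "deviation_inf w < deviation w i - (real n * slope w - of_int K) \<and>
      deviation w i - (real n * slope w - of_int K) < deviation_inf w + 1" if "i \<le> L" for i
  proof -
    have "\<epsilon> \<le> min (deviation w i - deviation_inf w) (deviation_inf w + 1 - deviation w i)"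
      unfolding \<epsilon>_def using that by (intro Min_le) auto
    then show ?thesis using small by linarith
  qed
  then show "factor_at w n L = factor_at w 0 L"
    using factor_at_translate[where m = 0 and N = n and K = K] by simp
qed

end

section \<open>Simultaneous Diophantine approximation along finite sums\<close>

lemma diff_near_integer_if_floor_eq:
  fixes x y M :: real
  assumes "\<lfloor>M * frac x\<rfloor> = \<lfloor>M * frac y\<rfloor>" "M > 0"
  shows "\<bar>(y - x) - of_int (\<lfloor>y\<rfloor> - \<lfloor>x\<rfloor>)\<bar> < 1 / M"
proof -
  have "\<bar>M * frac y - M * frac x\<bar> < 1" using assms(1) by linarith
  then have "M * \<bar>frac y - frac x\<bar> < 1" using assms(2) by (simp add: abs_mult right_diff_distrib[symmetric])
  then have "\<bar>frac y - frac x\<bar> < 1 / M" using assms(2) by (simp add: field_simps)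
  then show ?thesis by (simp add: frac_def algebra_simps)
qed

text \<open>Pigeonhole on the fractional parts of the partial sums \<open>S j = y 0 + \<dots> + y (j - 1)\<close>
  times \<open>a\<close> and \<open>b\<close>: two of them fall into the same cell of an \<open>M \<times> M\<close> grid, and their
  difference is a sum over an interval of indices.\<close>

lemma finite_sum_near_integers:
  fixes y :: "nat \<Rightarrow> nat" and a b \<epsilon> :: real
  assumes "\<epsilon> > 0"
  obtains F K1 K2 where "finite F" "F \<noteq> {}"
    "\<bar>real (sum y F) * a - of_int K1\<bar> < \<epsilon>" "\<bar>real (sum y F) * b - of_int K2\<bar> < \<epsilon>"
proof -
  obtain M :: nat where M: "1 / real M < \<epsilon>" "M > 0"
    using assms by (metis gr_zeroI inverse_eq_divide real_arch_inverse)
  define S where "S j = real (sum y {..<j})" for j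
  define cell where "cell j = (nat \<lfloor>real M * frac (S j * a)\<rfloor>, nat \<lfloor>real M * frac (S j * b)\<rfloor>)" for j
  have "\<lfloor>real M * frac x\<rfloor> < int M" for x
    using M frac_lt_1[of x] mult_strict_left_mono[of "frac x" 1 "real M"] by linarith
  then have "cell ` {..M * M} \<subseteq> {..<M} \<times> {..<M}" by (auto simp: cell_def nat_less_iff)
  then have "card (cell ` {..M * M}) \<le> M * M"
    using card_mono[of "{..<M} \<times> {..<M}"] by (simp add: card_cartesian_product)
  then have "\<not> inj_on cell {..M * M}" using card_image[of cell "{..M * M}"] by auto
  then obtain i1 i2 where "i1 \<noteq> i2" "cell i1 = cell i2" unfolding inj_on_def by blast
  then obtain j1 j2 where "j1 < j2" "cell j1 = cell j2"
    by (cases "i1 < i2") (auto simp: not_less_iff_gr_or_eq)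
  then have floors: "\<lfloor>real M * frac (S j1 * c)\<rfloor> = \<lfloor>real M * frac (S j2 * c)\<rfloor>" if "c \<in> {a, b}" for c
    using that by (auto simp: cell_def frac_ge_0 eq_nat_nat_iff)
  have "sum y {..<j2} = sum y {..<j1} + sum y {j1..<j2}"
    using \<open>j1 < j2\<close> by (simp add: sum.atLeastLessThan_concat[symmetric] atLeast0LessThan[symmetric])
  then have S: "real (sum y {j1..<j2}) * c = S j2 * c - S j1 * c" for c
    by (simp add: S_def algebra_simps)
  have near: "\<bar>real (sum y {j1..<j2}) * c - of_int (\<lfloor>S j2 * c\<rfloor> - \<lfloor>S j1 * c\<rfloor>)\<bar> < \<epsilon>"
    if "c \<in> {a, b}" for c
    using diff_near_integer_if_floor_eq[OF floors[OF that]] M unfolding S by linarith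
  show thesis
    by (rule that[of "{j1..<j2}" "\<lfloor>S j2 * a\<rfloor> - \<lfloor>S j1 * a\<rfloor>" "\<lfloor>S j2 * b\<rfloor> - \<lfloor>S j1 * b\<rfloor>"])
      (use near[of a] near[of b] \<open>j1 < j2\<close> in auto)
qed

lemma Bohr_neighbourhood_IP_star:
  assumes "\<epsilon> > 0"
    and "\<And>n K K'. \<bar>real n * \<alpha> - of_int K\<bar> < \<epsilon> \<Longrightarrow> \<bar>real n * \<alpha>' - of_int K'\<bar> < \<epsilon> \<Longrightarrow> n \<in> A"
  shows "IP_star A"
  unfolding IP_star_def
proof (intro allI impI)
  fix B assume "IP_set B"
  then obtain y :: "nat \<Rightarrow> nat" where y: "\<And>F. finite F \<Longrightarrow> F \<noteq> {} \<Longrightarrow> sum y F \<in> B"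
    by (auto simp: IP_set_def)
  obtain F K K' where "finite F" "F \<noteq> {}"
    "\<bar>real (sum y F) * \<alpha> - of_int K\<bar> < \<epsilon>" "\<bar>real (sum y F) * \<alpha>' - of_int K'\<bar> < \<epsilon>"
    using finite_sum_near_integers[OF assms(1), of y \<alpha> \<alpha>'] by blast
  then have "sum y F \<in> A \<inter> B" using assms(2) y by blast
  then show "A \<inter> B \<noteq> {}" by blast
qed

lemma IP_star_infinite: "IP_star A \<Longrightarrow> infinite A"
proof
  assume "IP_star A" "finite A"
  then obtain M where M: "\<forall>n\<in>A. n < M" using finite_nat_set_iff_bounded by blast
  have "IP_set {M..}"
    unfolding IP_set_def
  proof (intro exI conjI allI impI)
    show "strict_mono (\<lambda>i. M + i)" by (simp add: strict_mono_def)
    fix F :: "nat set" assume "finite F \<and> F \<noteq> {}"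
    then obtain i where "i \<in> F" "M + i \<le> sum (\<lambda>i. M + i) F"
      by (metis ex_in_conv member_le_sum zero_le)
    then show "sum (\<lambda>i. M + i) F \<in> {M..}" by simp
  qed
  then have "A \<inter> {M..} \<noteq> {}" using \<open>IP_star A\<close> by (simp add: IP_star_def)
  then show False using M by auto
qed

section \<open>Members of idempotent ultrafilters are IP-sets\<close>

fun greedy_list :: "(nat list \<Rightarrow> nat) \<Rightarrow> nat \<Rightarrow> nat list" where
  "greedy_list c 0 = []"
| "greedy_list c (Suc n) = greedy_list c n @ [c (greedy_list c n)]"

lemma length_greedy_list [simp]: "length (greedy_list c n) = n"
  by (induction n) auto

lemma greedy_list_nth: "i < n \<Longrightarrow> greedy_list c n ! i = greedy_list c (Suc i) ! i"
proof (induction n)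
  case (Suc n)
  then show ?case by (cases "i = n") (auto simp: nth_append)
qed simp

definition finite_sums_in :: "nat set \<Rightarrow> nat list \<Rightarrow> bool" where
  "finite_sums_in D l \<longleftrightarrow> (\<forall>F. F \<subseteq> {..<length l} \<and> F \<noteq> {} \<longrightarrow> (\<Sum>i\<in>F. l ! i) \<in> D)"

definition admissible_next :: "nat set \<Rightarrow> nat list \<Rightarrow> nat set" where
  "admissible_next D l = D \<inter> (\<Inter>F\<in>{F. F \<subseteq> {..<length l} \<and> F \<noteq> {}}. {m. m + (\<Sum>i\<in>F. l ! i) \<in> D})
      \<inter> (\<Inter>i<length l. {m. l ! i < m})"

lemma finite_sums_in_snoc:
  assumes "finite_sums_in D l" "m \<in> admissible_next D l"
  shows "finite_sums_in D (l @ [m])"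
  unfolding finite_sums_in_def
proof (intro allI impI)
  fix F assume F: "F \<subseteq> {..<length (l @ [m])} \<and> F \<noteq> {}"
  have "finite F" using F finite_subset by blast
  show "(\<Sum>i\<in>F. (l @ [m]) ! i) \<in> D"
  proof (cases "length l \<in> F")
    case False
    then have "F \<subseteq> {..<length l}" using F by (auto simp: less_Suc_eq)
    moreover from this have "(\<Sum>i\<in>F. (l @ [m]) ! i) = (\<Sum>i\<in>F. l ! i)"
      by (intro sum.cong) (auto simp: nth_append)
    ultimately show ?thesis using assms(1) F by (simp add: finite_sums_in_def)
  next
    case True
    define F' where "F' = F - {length l}"
    have F': "F' \<subseteq> {..<length l}" using F by (auto simp: F'_def)
    have "(\<Sum>i\<in>F. (l @ [m]) ! i) = m + (\<Sum>i\<in>F'. (l @ [m]) ! i)"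
      using True \<open>finite F\<close> by (simp add: F'_def sum.remove)
    also have "(\<Sum>i\<in>F'. (l @ [m]) ! i) = (\<Sum>i\<in>F'. l ! i)"
      using F' by (intro sum.cong) (auto simp: nth_append)
    finally show ?thesis using assms(2) F' by (cases "F' = {}") (auto simp: admissible_next_def)
  qed
qed

lemma IP_set_if_greedy:
  assumes "\<And>l. finite_sums_in D l \<Longrightarrow> c l \<in> admissible_next D l"
  shows "IP_set D"
proof -
  have sums: "finite_sums_in D (greedy_list c n)" for n
  proof (induction n)
    case (Suc n)
    then show ?case using finite_sums_in_snoc assms by simp
  qed (simp add: finite_sums_in_def)
  define x where "x i = greedy_list c (Suc i) ! i" for i
  have nth: "greedy_list c n ! i = x i" if "i < n" for n i
    using greedy_list_nth[OF that] by (simp add: x_def)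
  have "strict_mono x"
  proof (rule strict_monoI_Suc)
    fix i
    let ?l = "greedy_list c (Suc i)"
    have "c ?l \<in> admissible_next D ?l" by (rule assms[OF sums])
    then have "?l ! i < c ?l" by (auto simp: admissible_next_def simp del: greedy_list.simps)
    moreover have "x (Suc i) = c ?l"
      unfolding x_def greedy_list.simps(2)[of c "Suc i"] by (metis length_greedy_list nth_append_length)
    ultimately show "x i < x (Suc i)" by (simp add: x_def del: greedy_list.simps)
  qed
  moreover have "sum x F \<in> D" if "finite F" "F \<noteq> {}" for F
  proof -
    have sub: "F \<subseteq> {..<Suc (Max F)}" using that by (auto simp: le_imp_less_Suc)
    then have "sum x F = (\<Sum>i\<in>F. greedy_list c (Suc (Max F)) ! i)"
      by (intro sum.cong) (auto simp: nth simp del: greedy_list.simps)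
    then show ?thesis
      using sums[of "Suc (Max F)"] sub that by (simp add: finite_sums_in_def del: greedy_list.simps)
  qed
  ultimately show ?thesis unfolding IP_set_def by blast
qed

locale idempotent_ultrafilter =
  fixes p :: "nat set set"
  assumes ultrafilter: "ultrafilter_nat p" and nonprincipal: "\<not> principal p"
    and idempotent: "bplus p p = p"
begin

lemma empty_notin: "{} \<notin> p"
  using ultrafilter by (simp add: ultrafilter_nat_def)

lemma superset_in: "A \<in> p \<Longrightarrow> A \<subseteq> B \<Longrightarrow> B \<in> p"
  using ultrafilter unfolding ultrafilter_nat_def by blast

lemma Int_in: "A \<in> p \<Longrightarrow> B \<in> p \<Longrightarrow> A \<inter> B \<in> p"
  using ultrafilter unfolding ultrafilter_nat_def by blast

lemma in_or_Compl_in: "A \<in> p \<or> - A \<in> p"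
  using ultrafilter unfolding ultrafilter_nat_def by blast

lemma finite_notin: "finite S \<Longrightarrow> S \<notin> p"
proof (induction S rule: finite_induct)
  case (insert x S)
  have "- {x} \<in> p" using nonprincipal in_or_Compl_in by (auto simp: principal_def)
  then show ?case using insert Int_in[of "insert x S" "- {x}"] superset_in[of _ S] by blast
qed (use empty_notin in simp)

lemma greaterThan_in: "{N<..} \<in> p"
  using finite_notin[of "{..N}"] in_or_Compl_in[of "{..N}"] by (simp add: Compl_atMost)

lemma INT_in: "finite I \<Longrightarrow> (\<And>i. i \<in> I \<Longrightarrow> B i \<in> p) \<Longrightarrow> (\<Inter>i\<in>I. B i) \<in> p"
proof (induction I rule: finite_induct)
  case empty
  then show ?case using ultrafilter by (simp add: ultrafilter_nat_def)
qed (simp add: Int_in)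

text \<open>By idempotence, \<open>A \<in> p\<close> implies that \<open>{n \<in> A. A - n \<in> p} \<in> p\<close>; this set \<open>A\<^sup>\<star>\<close> is
  again stable under the same operation, which drives the greedy choice of an IP
  sequence inside \<open>A\<close>.\<close>

definition star :: "nat set \<Rightarrow> nat set" where
  "star A = {n \<in> A. {m. m + n \<in> A} \<in> p}"

lemma star_in: "A \<in> p \<Longrightarrow> star A \<in> p"
proof -
  assume A: "A \<in> p"
  then have "A \<in> bplus p p" using idempotent by simp
  then have "{n. {m. m + n \<in> A} \<in> p} \<in> p" by (simp add: bplus_def)
  then have "A \<inter> {n. {m. m + n \<in> A} \<in> p} \<in> p" using A Int_in by blast
  then show ?thesis by (simp add: star_def Int_def)
qed

lemma star_shift: "n \<in> star A \<Longrightarrow> {m. m + n \<in> star A} \<in> p"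
proof -
  assume n: "n \<in> star A"
  define B where "B = {m. m + n \<in> A}"
  have B: "B \<in> p" using n by (simp add: star_def B_def)
  then have "B \<in> bplus p p" using idempotent by simp
  then have C: "{m'. {m. m + m' \<in> B} \<in> p} \<in> p" by (simp add: bplus_def)
  have "B \<inter> {m'. {m. m + m' \<in> B} \<in> p} \<subseteq> {m. m + n \<in> star A}"
    by (auto simp: B_def star_def add.assoc)
  then show ?thesis using superset_in Int_in[OF B C] by blast
qed

lemma admissible_next_in:
  assumes "finite_sums_in (star A) l" "A \<in> p"
  shows "admissible_next (star A) l \<in> p"
proof -
  have "(\<Inter>F\<in>{F. F \<subseteq> {..<length l} \<and> F \<noteq> {}}. {m. m + (\<Sum>i\<in>F. l ! i) \<in> star A}) \<in> p"
    using assms star_shift by (intro INT_in) (auto simp: finite_sums_in_def)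
  moreover have "(\<Inter>i<length l. {m. l ! i < m}) \<in> p"
    using greaterThan_in by (intro INT_in) (auto simp: greaterThan_def)
  ultimately show ?thesis
    unfolding admissible_next_def using star_in[OF assms(2)] Int_in by blast
qed

theorem IP_set_if_member: "A \<in> p \<Longrightarrow> IP_set A"
proof -
  assume "A \<in> p"
  define c where "c l = (SOME m. m \<in> admissible_next (star A) l)" for l
  have "c l \<in> admissible_next (star A) l" if "finite_sums_in (star A) l" for l
    unfolding c_def using admissible_next_in[OF that \<open>A \<in> p\<close>] empty_notin
    by (metis ex_in_conv someI_ex)
  then have "IP_set (star A)" by (rule IP_set_if_greedy)
  moreover have "star A \<subseteq> A" by (auto simp: star_def)
  ultimately show ?thesis unfolding IP_set_def by blast
qed

end

theorem IP_star_central_star: "IP_star A \<Longrightarrow> central_star A"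
  unfolding central_star_def
proof (intro allI impI)
  fix p assume "IP_star A" "minimal_idempotent p"
  then interpret idempotent_ultrafilter p
    by unfold_locales (auto simp: minimal_idempotent_def betaN_def)
  show "A \<in> p"
  proof (rule ccontr)
    assume "A \<notin> p"
    then have "IP_set (- A)" using in_or_Compl_in IP_set_if_member by blast
    then show False using \<open>IP_star A\<close> unfolding IP_star_def by blast
  qed
qed

theorem mainTheorem14:
  fixes w w' :: "nat \<Rightarrow> nat" and u u' :: "nat list"
  assumes "sturmian w" and "nonsingular w"
    and "sturmian w'" and "nonsingular w'"
    and "u \<noteq> []" and "is_prefix u w"
    and "u' \<noteq> []" and "is_prefix u' w'"
  shows "IP_star (occurrences w u \<inter> occurrences w' u')
       \<and> central_star (occurrences w u \<inter> occurrences w' u')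
       \<and> infinite (occurrences w u \<inter> occurrences w' u')"
proof -
  interpret W: sturmian_word w by unfold_locales (rule assms(1))
  interpret W': sturmian_word w' by unfold_locales (rule assms(3))
  obtain \<epsilon> where "\<epsilon> > 0" and returns:
    "\<And>n K. \<bar>real n * slope w - of_int K\<bar> < \<epsilon> \<Longrightarrow> factor_at w n (length u) = u"
    using W.nonsingular_prefix_returns[OF assms(2), of "length u"] assms(6) by (auto simp: is_prefix_def)
  obtain \<epsilon>' where "\<epsilon>' > 0" and returns':
    "\<And>n K. \<bar>real n * slope w' - of_int K\<bar> < \<epsilon>' \<Longrightarrow> factor_at w' n (length u') = u'"
    using W'.nonsingular_prefix_returns[OF assms(4), of "length u'"] assms(8) by (auto simp: is_prefix_def)
  have "IP_star (occurrences w u \<inter> occurrences w' u')"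
    by (rule Bohr_neighbourhood_IP_star[of "min \<epsilon> \<epsilon>'" "slope w" "slope w'"])
      (use \<open>\<epsilon> > 0\<close> \<open>\<epsilon>' > 0\<close> returns returns' in \<open>auto simp: occurrences_def\<close>)
  then show ?thesis using IP_star_central_star IP_star_infinite by blast
qed

end
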